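(* Let $A$ be a finite alphabet, $X\subseteq A^{\mathbb{Z}}$ a subshift, $F\colon X\to X$ a cellular automaton on $X$, $\mu$ a $\sigma$-ergodic Borel probability measure on $X$, and $k\in\mathbb{Z}$ such that $\mu$ is equicontinuous for $(X,F\circ\sigma^{-k})$. Then the Cesàro means $\frac1n\sum_{i=0}^{n-1}\mu\circ F^{-i}$ converge vaguely as $n\to\infty$ to a probability measure $\mu_c$ which is both $F$-invariant and $\sigma$-invariant.
   Context: $\sigma((x_i)_i)=(x_{i+1})_i$ is the shift on $A^{\mathbb{Z}}$ (product topology, metric $d(x,y)=2^{-i}$, $i=\min\{|j|:x_j\ne y_j\}$). A subshift is a closed $\sigma$-invariant subset of $A^{\mathbb{Z}}$; a cellular automaton on $X$ is a continuous map $X\to X$ commuting with $\sigma$ (so $F\circ\sigma^{-k}$ is again one). A point $x$ is an equicontinuity point of $(X,G)$ if for every $\varepsilon>0$ there is $\eta>0$ with $d(x,y)\le\eta\Rightarrow d(G^i x,G^i y)\le\varepsilon$ for all $i>0$; $\mu$ is equicontinuous for $(X,G)$ if the set of equicontinuity points of $(X,G)$ has $\mu$-measure $1$. $\sigma$-ergodic means $\sigma$-invariant and ergodic. Vague convergence means convergence of integrals of all continuous functions. *)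

theory Defs
  imports "HOL-Probability.Probability"
begin

definition full_shift_top :: "'a set \<Rightarrow> (int \<Rightarrow> 'a) topology" where
  "full_shift_top A = product_topology (\<lambda>_. discrete_topology A) UNIV"

definition cdist :: "(int \<Rightarrow> 'a) \<Rightarrow> (int \<Rightarrow> 'a) \<Rightarrow> real" where
  "cdist x y = (if x = y then 0
     else (1/2) ^ (LEAST n. \<exists>j. nat \<bar>j\<bar> = n \<and> x j \<noteq> y j))"

text \<open>shift_by k x = sigma^k x, i.e. (sigma^k x)_i = x_(i+k).\<close>
definition shift_by :: "int \<Rightarrow> (int \<Rightarrow> 'a) \<Rightarrow> (int \<Rightarrow> 'a)" where
  "shift_by k x = (\<lambda>i. x (i + k))"

abbreviation shift :: "(int \<Rightarrow> 'a) \<Rightarrow> (int \<Rightarrow> 'a)" where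
  "shift \<equiv> shift_by 1"

definition subshift :: "'a set \<Rightarrow> (int \<Rightarrow> 'a) set \<Rightarrow> bool" where
  "subshift A X \<longleftrightarrow> X \<subseteq> topspace (full_shift_top A) \<and>
     closedin (full_shift_top A) X \<and> shift ` X = X"

definition cellular_automaton :: "'a set \<Rightarrow> (int \<Rightarrow> 'a) set \<Rightarrow> ((int \<Rightarrow> 'a) \<Rightarrow> (int \<Rightarrow> 'a)) \<Rightarrow> bool" where
  "cellular_automaton A X F \<longleftrightarrow>
     continuous_map (subtopology (full_shift_top A) X) (subtopology (full_shift_top A) X) F \<and>
     (\<forall>x\<in>X. F (shift x) = shift (F x))"

definition borel_sets_on :: "'a set \<Rightarrow> (int \<Rightarrow> 'a) set \<Rightarrow> (int \<Rightarrow> 'a) set set" where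
  "borel_sets_on A X = sigma_sets X {U. openin (subtopology (full_shift_top A) X) U}"

definition borel_prob_on :: "'a set \<Rightarrow> (int \<Rightarrow> 'a) set \<Rightarrow> (int \<Rightarrow> 'a) measure \<Rightarrow> bool" where
  "borel_prob_on A X M \<longleftrightarrow> prob_space M \<and> space M = X \<and> sets M = borel_sets_on A X"

definition invariant_measure :: "(int \<Rightarrow> 'a) measure \<Rightarrow> ((int \<Rightarrow> 'a) \<Rightarrow> (int \<Rightarrow> 'a)) \<Rightarrow> bool" where
  "invariant_measure M T \<longleftrightarrow> T \<in> M \<rightarrow>\<^sub>M M \<and> distr M M T = M"

definition shift_ergodic :: "(int \<Rightarrow> 'a) measure \<Rightarrow> bool" where
  "shift_ergodic M \<longleftrightarrow> invariant_measure M shift \<and>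
     (\<forall>B\<in>sets M. shift -` B \<inter> space M = B \<longrightarrow> emeasure M B = 0 \<or> emeasure M B = 1)"

definition equicont_point :: "(int \<Rightarrow> 'a) set \<Rightarrow> ((int \<Rightarrow> 'a) \<Rightarrow> (int \<Rightarrow> 'a)) \<Rightarrow> (int \<Rightarrow> 'a) \<Rightarrow> bool" where
  "equicont_point X G x \<longleftrightarrow> x \<in> X \<and>
     (\<forall>\<epsilon>>0. \<exists>\<eta>>0. \<forall>y\<in>X. cdist x y \<le> \<eta> \<longrightarrow>
        (\<forall>i>0. cdist ((G ^^ i) x) ((G ^^ i) y) \<le> \<epsilon>))"

definition equicontinuous_measure :: "(int \<Rightarrow> 'a) measure \<Rightarrow> (int \<Rightarrow> 'a) set \<Rightarrow> ((int \<Rightarrow> 'a) \<Rightarrow> (int \<Rightarrow> 'a)) \<Rightarrow> bool" where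
  "equicontinuous_measure M X G \<longleftrightarrow> emeasure M {x. equicont_point X G x} = 1"

end

theory Submission
  imports Defs
begin

(* Write G = F o sigma^(-k). As mu is shift invariant and F^i = G^i o sigma^(k i) on X, the
   measures mu o F^(-i) and mu o G^(-i) have the same integrals, so it suffices to study G-orbits.
   Equicontinuity points have full measure, hence some cylinder [w] of positive measure is
   blocking: all its points have G-orbits agreeing with that of its centre on the window of the
   local rule. By ergodicity almost every x contains w arbitrarily far to the left and to the right.
   Between two such occurrences the configuration evolves as a deterministic system with finitely
   many states, hence eventually periodically; so Cesaro averages of continuous functions along
   almost every orbit converge, and by dominated convergence so do the Cesaro means of their
   integrals. The limit is a positive normalised linear functional on C(X). Clopen sets generate
   the Borel sets of X and continuous functions are uniform limits of clopen step functions, so by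
   Caratheodory the functional is integration against a Borel probability measure mu_c. It is
   F-invariant since the Cesaro means for i and i + 1 differ by O(1/n), and shift invariant since
   F commutes with the shift and mu is shift invariant. *)

section \<open>Cesaro means and eventual periodicity\<close>

definition cesaro_mean :: "(nat \<Rightarrow> real) \<Rightarrow> nat \<Rightarrow> real" where
  "cesaro_mean u n = (1 / real n) * (\<Sum>i<n. u i)"

lemma cesaro_mean_add: "cesaro_mean (\<lambda>i. u i + v i) n = cesaro_mean u n + cesaro_mean v n"
  by (simp add: cesaro_mean_def sum.distrib distrib_left)

lemma cesaro_mean_diff: "cesaro_mean (\<lambda>i. u i - v i) n = cesaro_mean u n - cesaro_mean v n"
  by (simp add: cesaro_mean_def sum_subtractf right_diff_distrib)

lemma cesaro_mean_cmult: "cesaro_mean (\<lambda>i. c * u i) n = c * cesaro_mean u n"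
  by (simp add: cesaro_mean_def sum_distrib_left)

lemma cesaro_mean_nonneg: "(\<And>i. u i \<ge> 0) \<Longrightarrow> cesaro_mean u n \<ge> 0"
  by (simp add: cesaro_mean_def sum_nonneg)

lemma cesaro_mean_const_tendsto: "cesaro_mean (\<lambda>_. c) \<longlonglongrightarrow> c"
proof (rule Lim_transform_eventually[OF tendsto_const])
  show "\<forall>\<^sub>F n in sequentially. c = cesaro_mean (\<lambda>_. c) n"
    by (rule eventually_sequentiallyI[of 1]) (simp add: cesaro_mean_def)
qed

lemma cesaro_mean_abs_le:
  assumes "\<And>i. \<bar>u i\<bar> \<le> B"
  shows "\<bar>cesaro_mean u n\<bar> \<le> B"
proof (cases "n = 0")
  case True
  then show ?thesis using assms[of 0] by (simp add: cesaro_mean_def)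
next
  case False
  have "\<bar>\<Sum>i<n. u i\<bar> \<le> (\<Sum>i<n. B)"
    using order_trans[OF sum_abs sum_mono[of "{..<n}" "\<lambda>i. \<bar>u i\<bar>" "\<lambda>_. B"]] assms by blast
  with False show ?thesis by (simp add: cesaro_mean_def abs_mult field_simps)
qed

lemma cesaro_mean_Suc_tendsto:
  assumes lim: "cesaro_mean u \<longlonglongrightarrow> l" and bound: "\<And>i. \<bar>u i\<bar> \<le> B"
  shows "cesaro_mean (\<lambda>i. u (Suc i)) \<longlonglongrightarrow> l"
proof -
  have telescope: "cesaro_mean (\<lambda>i. u (Suc i)) n - cesaro_mean u n = (u n - u 0) / real n" for n
    using sum_lessThan_telescope[of u n] by (simp add: cesaro_mean_diff[symmetric]) (simp add: cesaro_mean_def)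
  have "(\<lambda>n. (u n - u 0) / real n) \<longlonglongrightarrow> 0"
  proof (rule Lim_null_comparison[OF _ lim_const_over_n[of "2 * B"]])
    have "\<bar>u n - u 0\<bar> \<le> 2 * B" for n
      using bound[of n] bound[of 0] by linarith
    then show "\<forall>\<^sub>F n in sequentially. norm ((u n - u 0) / real n) \<le> 2 * B / real n"
      by (intro always_eventually allI) (simp add: abs_divide divide_right_mono)
  qed
  then have "(\<lambda>n. cesaro_mean u n + (u n - u 0) / real n) \<longlonglongrightarrow> l + 0"
    by (intro tendsto_add lim)
  then show ?thesis by (simp add: telescope[symmetric])
qed

lemma cesaro_mean_convergent_if_eventually_periodic:
  assumes p: "p > 0" and periodic: "\<And>n. n \<ge> n0 \<Longrightarrow> v (n + p) = v n"
  shows "convergent (cesaro_mean v)"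
proof -
  define c where "c = (\<Sum>i\<in>{n0..<n0 + p}. v i) / real p"
  define D where "D n = (\<Sum>i<n. v i) - real n * c" for n
  have period_sum: "(\<Sum>i\<in>{n..<n + p}. v i) = real p * c" if "n \<ge> n0" for n
    using that
  proof (induction n rule: dec_induct)
    case (step n)
    have "(\<Sum>i\<in>{Suc n..<Suc n + p}. v i) = (\<Sum>i\<in>{n..<n + p}. v i) - v n + v (n + p)"
      using p by (simp add: sum.atLeast_Suc_lessThan sum.atLeastLessThan_Suc)
    with step periodic show ?case by simp
  qed (use p in \<open>simp add: c_def\<close>)
  have D_periodic: "D (n + p) = D n" if "n \<ge> n0" for n
    using period_sum[OF that]
    by (simp add: D_def sum.atLeastLessThan_concat[of 0 n "n + p", symmetric] lessThan_atLeast0 algebra_simps)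
  define K where "K = Max ((\<lambda>n. \<bar>D n\<bar>) ` {..<n0 + p})"
  have D_bounded: "\<bar>D n\<bar> \<le> K" for n
  proof (induction n rule: less_induct)
    case (less n)
    show ?case
    proof (cases "n < n0 + p")
      case True
      then show ?thesis unfolding K_def by (intro Max_ge) auto
    next
      case False
      then have "D n = D (n - p)" "n - p < n" using D_periodic[of "n - p"] p by simp_all
      with less show ?thesis by simp
    qed
  qed
  have "(\<lambda>n. D n / real n) \<longlonglongrightarrow> 0"
    by (rule Lim_null_comparison[OF _ lim_const_over_n[of K]])
      (use D_bounded in \<open>auto intro: always_eventually simp: abs_divide divide_right_mono\<close>)
  then have "(\<lambda>n. c + D n / real n) \<longlonglongrightarrow> c + 0"
    by (intro tendsto_add tendsto_const)
  moreover have "\<forall>\<^sub>F n in sequentially. c + D n / real n = cesaro_mean v n"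
    by (rule eventually_sequentiallyI[of 1]) (simp add: D_def cesaro_mean_def field_simps)
  ultimately show ?thesis
    by (auto intro: convergentI dest: Lim_transform_eventually)
qed

lemma convergent_if_uniformly_approximable:
  fixes a :: "nat \<Rightarrow> real"
  assumes "\<And>e. e > 0 \<Longrightarrow> \<exists>b. convergent b \<and> (\<forall>n. \<bar>a n - b n\<bar> \<le> e)"
  shows "convergent a"
proof -
  have "Cauchy a"
  proof (rule metric_CauchyI)
    fix e :: real
    assume "e > 0"
    then have "e / 4 > 0" by simp
    then obtain b where "convergent b" and close: "\<And>n. \<bar>a n - b n\<bar> \<le> e / 4"
      using assms by blast
    then have "Cauchy b" by (simp add: Cauchy_convergent_iff)
    then obtain M where M: "\<And>m n. m \<ge> M \<Longrightarrow> n \<ge> M \<Longrightarrow> dist (b m) (b n) < e / 4"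
      using metric_CauchyD \<open>e / 4 > 0\<close> by blast
    have "dist (a m) (a n) < e" if "m \<ge> M" "n \<ge> M" for m n
      using M[OF that] close[of m] close[of n] unfolding dist_real_def abs_less_iff abs_le_iff by linarith
    then show "\<exists>M. \<forall>m\<ge>M. \<forall>n\<ge>M. dist (a m) (a n) < e" by blast
  qed
  then show ?thesis by (simp add: Cauchy_convergent_iff)
qed

lemma cesaro_mean_convergent_if_almost_periodic:
  assumes "\<And>e. e > 0 \<Longrightarrow> \<exists>n0 p. p > 0 \<and> (\<forall>n\<ge>n0. \<forall>q. \<bar>u (n + q * p) - u n\<bar> \<le> e)"
  shows "convergent (cesaro_mean u)"
proof (rule convergent_if_uniformly_approximable)
  fix e :: real
  assume "e > 0"
  then obtain n0 p where p: "p > 0" and almost: "\<forall>n\<ge>n0. \<forall>q. \<bar>u (n + q * p) - u n\<bar> \<le> e"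
    using assms by meson
  \<comment> \<open>\<open>u\<close> is uniformly \<open>e\<close>-close to the eventually periodic sequence \<open>u \<circ> r\<close>\<close>
  define r where "r i = (if i < n0 then i else n0 + (i - n0) mod p)" for i
  have "convergent (cesaro_mean (\<lambda>i. u (r i)))"
  proof (rule cesaro_mean_convergent_if_eventually_periodic[OF p])
    fix n
    assume "n \<ge> n0"
    then have "(n + p - n0) mod p = (n - n0) mod p"
      by (metis Nat.add_diff_assoc2 mod_add_self2)
    with \<open>n \<ge> n0\<close> show "u (r (n + p)) = u (r n)" by (simp add: r_def)
  qed
  moreover have "\<bar>cesaro_mean u n - cesaro_mean (\<lambda>i. u (r i)) n\<bar> \<le> e" for n
  proof -
    have "\<bar>u i - u (r i)\<bar> \<le> e" for i
    proof (cases "i < n0")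
      case True
      then show ?thesis using \<open>e > 0\<close> by (simp add: r_def)
    next
      case False
      define q where "q = (i - n0) div p"
      have "r i = n0 + (i - n0) mod p"
        using False by (simp add: r_def)
      moreover have "(i - n0) mod p + q * p = i - n0"
        unfolding q_def by (rule mod_div_mult_eq)
      ultimately have "r i \<ge> n0" "r i + q * p = i"
        using False by linarith+
      with almost show ?thesis by metis
    qed
    then show ?thesis
      using cesaro_mean_abs_le[of "\<lambda>i. u i - u (r i)" e n] by (simp add: cesaro_mean_diff)
  qed
  ultimately show "\<exists>b. convergent b \<and> (\<forall>n. \<bar>cesaro_mean u n - b n\<bar> \<le> e)" by blast
qed

lemma eventually_periodic_if_finite_deterministic:
  assumes "finite (range s)" and deterministic: "\<And>n n'. s n = s n' \<Longrightarrow> s (Suc n) = s (Suc n')"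
  shows "\<exists>n0 p. p > 0 \<and> (\<forall>n\<ge>n0. \<forall>q. s (n + q * p) = s n)"
proof -
  have "\<not> inj s"
    using assms(1) finite_imageD infinite_UNIV_nat by blast
  then obtain n1 n2 where "n1 < n2" "s n1 = s n2"
    unfolding inj_def by (metis linorder_neqE_nat)
  then have same_future: "s (n1 + t) = s (n2 + t)" for t
    by (induction t) (auto dest: deterministic)
  define p where "p = n2 - n1"
  have period: "s (n + p) = s n" if "n \<ge> n1" for n
  proof -
    have "n = n1 + (n - n1)" "n + p = n2 + (n - n1)"
      using that \<open>n1 < n2\<close> by (simp_all add: p_def)
    then show ?thesis using same_future[of "n - n1"] by simp
  qed
  have "s (n + q * p) = s n" if "n \<ge> n1" for n q
  proof (induction q)
    case (Suc q)
    have "s (n + Suc q * p) = s ((n + q * p) + p)" by (simp add: algebra_simps)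
    also have "\<dots> = s (n + q * p)" using that by (intro period) simp
    finally show ?case using Suc.IH by simp
  qed simp
  then show ?thesis using \<open>n1 < n2\<close> p_def by (intro exI[of _ n1] exI[of _ p]) auto
qed

lemma eventually_periodic_between_repetitions:
  fixes Y :: "nat \<Rightarrow> int \<Rightarrow> 'a" and \<rho> :: nat
  assumes "finite A" and in_A: "\<And>n j. Y n j \<in> A"
    and local: "\<And>n n' j. (\<And>i. \<bar>i - j\<bar> \<le> int \<rho> \<Longrightarrow> Y n i = Y n' i) \<Longrightarrow> Y (Suc n) j = Y (Suc n') j"
    and gap: "a + int \<rho> \<le> b"
    and repeat: "\<And>n i. \<bar>i\<bar> \<le> int \<rho> \<Longrightarrow> Y n (a + i) = Y n (b + i)"
  shows "\<exists>n0 p. p > 0 \<and> (\<forall>n\<ge>n0. \<forall>q. \<forall>j\<in>{a..b}. Y (n + q * p) j = Y n j)"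
proof -
  define s where "s n = restrict (Y n) {a..b}" for n
  have s_eq_iff: "s n = s n' \<longleftrightarrow> (\<forall>j\<in>{a..b}. Y n j = Y n' j)" for n n'
    by (auto simp: s_def restrict_def fun_eq_iff)
  \<comment> \<open>the margins of the window repeat its interior, so the window evolves autonomously\<close>
  have margin: "Y n i = Y n' i" if "s n = s n'" "a - int \<rho> \<le> i" "i \<le> b + int \<rho>" for n n' i
  proof -
    consider "i < a" | "a \<le> i" "i \<le> b" | "b < i" by linarith
    then show ?thesis
    proof cases
      case 1
      then have "Y m i = Y m (b + (i - a))" for m
        using repeat[of "i - a" m] that(2) by simp
      with 1 that gap show ?thesis by (simp add: s_eq_iff)
    next
      case 3
      then have "Y m i = Y m (a + (i - b))" for m
        using repeat[of "i - b" m] that(3) by simp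
      with 3 that gap show ?thesis by (simp add: s_eq_iff)
    qed (use that in \<open>simp add: s_eq_iff\<close>)
  qed
  have "s (Suc n) = s (Suc n')" if "s n = s n'" for n n'
  proof -
    have "Y (Suc n) j = Y (Suc n') j" if "j \<in> {a..b}" for j
      using that by (intro local margin[OF \<open>s n = s n'\<close>]) auto
    then show ?thesis by (simp add: s_eq_iff)
  qed
  moreover have "finite (range s)"
    by (rule finite_subset[of _ "PiE {a..b} (\<lambda>_. A)"]) (auto simp: s_def in_A \<open>finite A\<close> finite_PiE)
  ultimately show ?thesis
    using eventually_periodic_if_finite_deterministic[of s] by (simp add: s_eq_iff)
qed

section \<open>Ergodic maps and recurrence\<close>

definition ergodic_map :: "'b measure \<Rightarrow> ('b \<Rightarrow> 'b) \<Rightarrow> bool" where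
  "ergodic_map M T \<longleftrightarrow> T \<in> M \<rightarrow>\<^sub>M M \<and> distr M M T = M \<and>
     (\<forall>B\<in>sets M. T -` B \<inter> space M = B \<longrightarrow> emeasure M B = 0 \<or> emeasure M B = 1)"

lemma shift_ergodic_iff_ergodic_map: "shift_ergodic M \<longleftrightarrow> ergodic_map M shift"
  by (auto simp: shift_ergodic_def invariant_measure_def ergodic_map_def)

lemma ergodic_map_left_inverse:
  assumes T: "ergodic_map M T" and S: "S \<in> M \<rightarrow>\<^sub>M M"
    and left_inverse: "\<And>x. x \<in> space M \<Longrightarrow> S (T x) = x"
  shows "ergodic_map M S"
proof -
  have T_meas: "T \<in> M \<rightarrow>\<^sub>M M" and T_inv: "distr M M T = M"
    using T by (auto simp: ergodic_map_def)
  have pre_pre: "T -` (S -` B \<inter> space M) \<inter> space M = B" if "B \<in> sets M" for B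
    using sets.sets_into_space[OF that] measurable_space[OF T_meas] left_inverse by auto
  have "emeasure M (S -` B \<inter> space M) = emeasure M B" if "B \<in> sets M" for B
  proof -
    have "emeasure M (S -` B \<inter> space M) = emeasure (distr M M T) (S -` B \<inter> space M)"
      by (simp add: T_inv)
    also have "\<dots> = emeasure M B"
      using emeasure_distr[OF T_meas measurable_sets[OF S that]] pre_pre[OF that] by simp
    finally show ?thesis .
  qed
  then have "distr M M S = M"
    by (intro measure_eqI) (simp_all add: emeasure_distr[OF S])
  moreover have "T -` B \<inter> space M = B" if "B \<in> sets M" "S -` B \<inter> space M = B" for B
    using pre_pre[OF that(1)] that(2) by simp
  ultimately show ?thesis
    using S T by (auto simp: ergodic_map_def)
qed

lemma measurable_funpow:
  assumes "T \<in> M \<rightarrow>\<^sub>M M"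
  shows "T ^^ n \<in> M \<rightarrow>\<^sub>M M"
proof (induction n)
  case (Suc n)
  then show ?case using measurable_comp[OF Suc.IH assms] by (simp add: o_def)
qed (simp add: measurable_ident)

lemma distr_funpow_eq:
  assumes "T \<in> M \<rightarrow>\<^sub>M M" "distr M M T = M"
  shows "distr M M (T ^^ n) = M"
proof (induction n)
  case (Suc n)
  have "distr M M (T ^^ Suc n) = distr (distr M M T) M (T ^^ n)"
    unfolding funpow_Suc_right by (rule distr_distr[OF measurable_funpow[OF assms(1)] assms(1), symmetric])
  also have "\<dots> = M"
    using Suc assms(2) by simp
  finally show ?case .
qed (simp add: distr_id)

lemma (in prob_space) abs_integral_le_const:
  fixes h :: "'a \<Rightarrow> real"
  assumes "integrable M h" and bound: "\<And>x. x \<in> space M \<Longrightarrow> \<bar>h x\<bar> \<le> c"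
  shows "\<bar>integral\<^sup>L M h\<bar> \<le> c"
proof -
  have "- c \<le> h x" "h x \<le> c" if "x \<in> space M" for x
    using bound[OF that] by linarith+
  then have "- c \<le> integral\<^sup>L M h" "integral\<^sup>L M h \<le> c"
    using assms(1) by (auto intro: integral_ge_const integral_le_const AE_I2)
  then show ?thesis by linarith
qed

lemma vimage_tail_hits:
  assumes "T \<in> M \<rightarrow>\<^sub>M M"
  shows "T -` (\<Union>n. (T ^^ (n + N)) -` C \<inter> space M) \<inter> space M = (\<Union>n. (T ^^ (n + Suc N)) -` C \<inter> space M)"
  using measurable_space[OF assms] by (auto simp: funpow_swap1)

lemma tail_hits_Suc_subset:
  "(\<Union>n. (T ^^ (n + Suc N)) -` C \<inter> space M) \<subseteq> (\<Union>n. (T ^^ (n + N)) -` C \<inter> space M)"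
  by (auto simp del: add_Suc_right) (metis add_Suc add_Suc_right)

lemma (in prob_space) emeasure_le_recurrent:
  assumes T: "T \<in> M \<rightarrow>\<^sub>M M" "distr M M T = M" and C: "C \<in> sets M"
  shows "emeasure M C \<le> emeasure M (\<Inter>N. \<Union>n. (T ^^ (n + N)) -` C \<inter> space M)"
proof -
  define E where "E N = (\<Union>n. (T ^^ (n + N)) -` C \<inter> space M)" for N
  have E_sets: "E N \<in> sets M" for N
    unfolding E_def
    by (rule sets.countable_nat_UN) (auto intro: measurable_sets[OF measurable_funpow[OF T(1)] C])
  have "emeasure M (E (Suc N)) = emeasure M (E N)" for N
    using emeasure_distr[OF T(1) E_sets[of N]] vimage_tail_hits[OF T(1)] T(2) by (simp add: E_def)
  then have E_const: "(\<lambda>N. emeasure M (E N)) = (\<lambda>_. emeasure M (E 0))"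
    by (intro ext, induct_tac N) simp_all
  have "C \<subseteq> E 0"
    using sets.sets_into_space[OF C] unfolding E_def by (intro subsetI UN_I[of 0]) auto
  then have "emeasure M C \<le> emeasure M (E 0)"
    by (rule emeasure_mono[OF _ E_sets])
  also have "\<dots> = (INF N. emeasure M (E N))"
    unfolding E_const by simp
  also have "\<dots> = emeasure M (\<Inter>N. E N)"
  proof (rule INF_emeasure_decseq)
    show "decseq E"
      unfolding E_def by (rule decseq_SucI) (rule tail_hits_Suc_subset)
  qed (use E_sets in auto)
  finally show ?thesis
    by (simp add: E_def)
qed

lemma (in prob_space) AE_ergodic_recurrence:
  assumes T: "ergodic_map M T" and C: "C \<in> sets M" "emeasure M C \<noteq> 0"
  shows "AE x in M. \<forall>N. \<exists>n\<ge>N. (T ^^ n) x \<in> C"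
proof -
  have T_meas: "T \<in> M \<rightarrow>\<^sub>M M" and T_inv: "distr M M T = M"
    and T_erg: "\<And>B. B \<in> sets M \<Longrightarrow> T -` B \<inter> space M = B \<Longrightarrow> emeasure M B = 0 \<or> emeasure M B = 1"
    using T by (auto simp: ergodic_map_def)
  define E where "E N = (\<Union>n. (T ^^ (n + N)) -` C \<inter> space M)" for N
  define R where "R = (\<Inter>N. E N)"
  have "E N \<in> sets M" for N
    unfolding E_def
    by (rule sets.countable_nat_UN) (auto intro: measurable_sets[OF measurable_funpow[OF T_meas] C(1)])
  then have R_sets: "R \<in> sets M"
    unfolding R_def by auto
  have E_pre: "T -` E N \<inter> space M = E (Suc N)" for N
    unfolding E_def by (rule vimage_tail_hits[OF T_meas])
  have E_Suc: "E (Suc N) \<subseteq> E N" for N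
    unfolding E_def by (rule tail_hits_Suc_subset)
  have "T -` R \<inter> space M = (\<Inter>N. E (Suc N))"
    unfolding R_def by (auto simp flip: E_pre)
  also have "\<dots> = R"
    unfolding R_def using E_Suc by blast
  finally have R_invariant: "T -` R \<inter> space M = R" .
  have "emeasure M C \<le> emeasure M R"
    using emeasure_le_recurrent[OF T_meas T_inv C(1)] by (simp add: R_def E_def)
  then have "emeasure M R \<noteq> 0"
    using C(2) by (auto simp: zero_less_iff_neq_zero[symmetric] elim: order.strict_trans2)
  then have "emeasure M R = 1"
    using T_erg[OF R_sets R_invariant] by simp
  then have "AE x in M. x \<in> R"
    by (intro AE_prob_1) (simp add: emeasure_eq_measure)
  then show ?thesis
    by eventually_elim (auto simp: R_def E_def, metis le_add2)
qed

section \<open>Topology of the full shift\<close>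

definition agree :: "nat \<Rightarrow> (int \<Rightarrow> 'a) \<Rightarrow> (int \<Rightarrow> 'a) \<Rightarrow> bool" where
  "agree m x y \<longleftrightarrow> (\<forall>i. \<bar>i\<bar> \<le> int m \<longrightarrow> x i = y i)"

lemma agree_refl [simp]: "agree m x x"
  by (simp add: agree_def)

lemma agree_sym: "agree m x y \<Longrightarrow> agree m y x"
  by (simp add: agree_def)

lemma agree_trans: "agree m x y \<Longrightarrow> agree m y z \<Longrightarrow> agree m x z"
  by (simp add: agree_def)

lemma agree_mono: "agree m x y \<Longrightarrow> m' \<le> m \<Longrightarrow> agree m' x y"
  by (auto simp: agree_def)

lemma cdist_le_half_power_iff: "cdist x y \<le> (1/2) ^ Suc m \<longleftrightarrow> agree m x y"
proof (cases "x = y")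
  case False
  define d where "d = (LEAST n. \<exists>j. nat \<bar>j\<bar> = n \<and> x j \<noteq> y j)"
  obtain j0 where j0: "x j0 \<noteq> y j0"
    using False by blast
  obtain j where j: "nat \<bar>j\<bar> = d" "x j \<noteq> y j"
    using LeastI_ex[of "\<lambda>n. \<exists>j. nat \<bar>j\<bar> = n \<and> x j \<noteq> y j"] j0 unfolding d_def by blast
  have least: "d \<le> nat \<bar>i\<bar>" if "x i \<noteq> y i" for i
    unfolding d_def using that by (intro Least_le) blast
  have "cdist x y = (1/2) ^ d"
    using False by (simp add: cdist_def d_def)
  moreover have "(1/2::real) ^ d \<le> (1/2) ^ Suc m \<longleftrightarrow> Suc m \<le> d"
    by (rule power_decreasing_iff) simp_all
  moreover have "Suc m \<le> d \<longleftrightarrow> agree m x y"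
  proof
    assume "Suc m \<le> d"
    show "agree m x y"
      unfolding agree_def
    proof (intro allI impI)
      fix i
      assume "\<bar>i\<bar> \<le> int m"
      show "x i = y i"
      proof (rule ccontr)
        assume "x i \<noteq> y i"
        with \<open>\<bar>i\<bar> \<le> int m\<close> \<open>Suc m \<le> d\<close> least[of i] show False by linarith
      qed
    qed
  next
    assume "agree m x y"
    with j(2) have "\<not> \<bar>j\<bar> \<le> int m" by (auto simp: agree_def)
    with j(1) show "Suc m \<le> d" by linarith
  qed
  ultimately show ?thesis by simp
qed (simp add: cdist_def)

lemma shift_by_add: "shift_by a (shift_by b x) = shift_by (a + b) x"
  by (simp add: shift_by_def add_ac)

lemma shift_by_0 [simp]: "shift_by 0 x = x"
  by (simp add: shift_by_def)

lemma funpow_shift_by: "(shift_by j ^^ n) x = shift_by (j * int n) x"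
  by (induction n) (simp_all add: shift_by_add algebra_simps)

lemma topspace_full_shift_top: "topspace (full_shift_top A) = {x. \<forall>i. x i \<in> A}"
  by (auto simp: full_shift_top_def topspace_product_topology PiE_def extensional_def)

lemma full_shift_cylinder_eq_PiE:
  assumes "x \<in> topspace (full_shift_top A)"
  shows "{y \<in> topspace (full_shift_top A). agree m x y} =
    PiE UNIV (\<lambda>i. if \<bar>i\<bar> \<le> int m then {x i} else A)"
  using assms by (auto simp: topspace_full_shift_top agree_def PiE_iff split: if_splits)

lemma openin_full_shift_cylinder:
  assumes "x \<in> topspace (full_shift_top A)"
  shows "openin (full_shift_top A) {y \<in> topspace (full_shift_top A). agree m x y}"
proof -
  have "finite {i. (if \<bar>i\<bar> \<le> int m then {x i} else A) \<noteq> A}"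
    by (rule finite_subset[of _ "{- int m..int m}"]) auto
  moreover have "x i \<in> A" for i
    using assms by (simp add: topspace_full_shift_top)
  ultimately show ?thesis
    unfolding full_shift_cylinder_eq_PiE[OF assms] unfolding full_shift_top_def
    by (intro iffD2[OF openin_PiE_gen] disjI2) auto
qed

lemma closedin_full_shift_cylinder:
  assumes "x \<in> topspace (full_shift_top A)"
  shows "closedin (full_shift_top A) {y \<in> topspace (full_shift_top A). agree m x y}"
proof -
  have "x i \<in> A" for i
    using assms by (simp add: topspace_full_shift_top)
  then show ?thesis
    unfolding full_shift_cylinder_eq_PiE[OF assms] unfolding full_shift_top_def
    by (intro iffD2[OF closedin_product_topology] disjI2) simp
qed

lemma full_shift_open_contains_cylinder:
  assumes "openin (full_shift_top A) V" "x \<in> V"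
  shows "\<exists>m. \<forall>y\<in>topspace (full_shift_top A). agree m x y \<longrightarrow> y \<in> V"
proof -
  obtain W where "finite {i \<in> UNIV. W i \<noteq> topspace (discrete_topology A)}"
    and W: "x \<in> PiE UNIV W" "PiE UNIV W \<subseteq> V"
    using assms unfolding full_shift_top_def openin_product_topology_alt by blast
  then have fin: "finite {i. W i \<noteq> A}"
    by simp
  define m where "m = Max (insert 0 ((\<lambda>i. nat \<bar>i\<bar>) ` {i. W i \<noteq> A}))"
  have outside: "W i = A" if "\<bar>i\<bar> > int m" for i
  proof (rule ccontr)
    assume "W i \<noteq> A"
    then have "nat \<bar>i\<bar> \<le> m"
      unfolding m_def using fin by (intro Max_ge) auto
    with that show False by linarith
  qed
  have "y \<in> V" if y: "y \<in> topspace (full_shift_top A)" "agree m x y" for y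
  proof -
    have "y i \<in> W i" for i
    proof (cases "\<bar>i\<bar> \<le> int m")
      case True
      then have "x i = y i" using y(2) by (simp add: agree_def)
      moreover have "x i \<in> W i" using W(1) by (simp add: PiE_iff)
      ultimately show ?thesis by simp
    next
      case False
      then show ?thesis using y(1) outside by (simp add: topspace_full_shift_top)
    qed
    then show ?thesis using W(2) by (auto simp: PiE_iff)
  qed
  then show ?thesis by blast
qed

lemma compact_space_full_shift_top: "finite A \<Longrightarrow> compact_space (full_shift_top A)"
  unfolding full_shift_top_def
  by (simp add: compact_space_product_topology compact_space_discrete_topology)

lemma continuous_map_full_shift_coordinate:
  "continuous_map (full_shift_top A) (discrete_topology A) (\<lambda>x. x i)"
  unfolding full_shift_top_def by (rule continuous_map_product_projection) simp

lemma continuous_map_funpow: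
  "continuous_map T T g \<Longrightarrow> continuous_map T T (g ^^ n)"
  by (induction n) (auto simp: continuous_map_compose)

lemma compactin_disjoint_open_family_eventually_empty:
  fixes F :: "nat \<Rightarrow> 'a set"
  assumes compact: "compactin T (\<Union>i. F i)" and opens: "\<And>i. openin T (F i)"
    and disjoint: "disjoint_family F"
  shows "\<exists>N. \<forall>i\<ge>N. F i = {}"
proof -
  have "\<forall>\<U>. (\<forall>B\<in>\<U>. openin T B) \<and> (\<Union>i. F i) \<subseteq> \<Union>\<U> \<longrightarrow>
      (\<exists>\<F>. finite \<F> \<and> \<F> \<subseteq> \<U> \<and> (\<Union>i. F i) \<subseteq> \<Union>\<F>)"
    using compact unfolding compactin_def by (elim conjE) assumption
  moreover have "\<forall>B\<in>range F. openin T B"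
    using opens by blast
  ultimately have "\<exists>\<F>. finite \<F> \<and> \<F> \<subseteq> range F \<and> (\<Union>i. F i) \<subseteq> \<Union>\<F>"
    by blast
  then obtain \<F> where \<F>: "finite \<F>" "\<F> \<subseteq> range F" "(\<Union>i. F i) \<subseteq> \<Union>\<F>"
    by blast
  obtain I where I: "finite I" "\<F> = F ` I"
    using finite_subset_image[OF \<F>(1,2)] by blast
  define N where "N = Suc (Max (insert 0 I))"
  have "F i = {}" if "i \<ge> N" for i
  proof -
    have "i \<notin> I"
    proof
      assume "i \<in> I"
      then have "i \<le> Max (insert 0 I)"
        using I(1) by (intro Max_ge) auto
      with that show False
        by (simp add: N_def)
    qed
    then have "F i \<inter> F j = {}" if "j \<in> I" for j
      using disjoint that unfolding disjoint_family_on_def by (metis UNIV_I)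
    moreover have "F i \<subseteq> (\<Union>j\<in>I. F j)"
      using \<F>(3) I(2) by blast
    ultimately show ?thesis
      by blast
  qed
  then show ?thesis by blast
qed

section \<open>Subshifts\<close>

locale subshift_space =
  fixes A :: "'a set" and X :: "(int \<Rightarrow> 'a) set"
  assumes finite_alphabet: "finite A" and subshift: "subshift A X"
begin

abbreviation TX :: "(int \<Rightarrow> 'a) topology" where
  "TX \<equiv> subtopology (full_shift_top A) X"

abbreviation observable :: "((int \<Rightarrow> 'a) \<Rightarrow> real) \<Rightarrow> bool" where
  "observable f \<equiv> continuous_map TX euclideanreal f"

lemma X_subset_topspace: "X \<subseteq> topspace (full_shift_top A)"
  using subshift by (simp add: subshift_def)

lemma topspace_TX [simp]: "topspace TX = X"
  using X_subset_topspace by auto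

lemma topspace_Int_X [simp]: "topspace (full_shift_top A) \<inter> X = X"
  using X_subset_topspace by auto

lemma in_alphabet: "x \<in> X \<Longrightarrow> x i \<in> A"
  using X_subset_topspace by (auto simp: topspace_full_shift_top)

lemma compact_space_TX: "compact_space TX"
  using subshift compact_space_full_shift_top[OF finite_alphabet]
  by (intro compact_space_subtopology closedin_compact_space) (auto simp: subshift_def)

lemma compactin_X: "compactin TX X"
  using compact_space_TX unfolding compact_space_def by (simp only: topspace_TX)

lemma shift_by_in_X:
  assumes "x \<in> X"
  shows "shift_by j x \<in> X"
proof (induction j rule: int_induct[where k = 0])
  case (step1 i)
  have "shift_by (i + 1) x = shift (shift_by i x)"
    by (simp add: shift_by_add add.commute)
  with step1 subshift show ?case by (auto simp: subshift_def)
next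
  case (step2 i)
  then obtain y where "y \<in> X" "shift_by i x = shift y"
    using subshift by (auto simp: subshift_def)
  have "shift_by (i - 1) x = shift_by (-1) (shift_by i x)"
    by (simp add: shift_by_add)
  also have "\<dots> = y"
    using \<open>shift_by i x = shift y\<close> by (simp add: shift_by_add)
  finally show ?case
    using \<open>y \<in> X\<close> by simp
qed (simp add: assms)

lemma continuous_map_shift_by: "continuous_map TX TX (shift_by j)"
proof -
  have "continuous_map TX (full_shift_top A) (shift_by j)"
    unfolding full_shift_top_def continuous_map_componentwise_UNIV
  proof
    fix i
    have "continuous_map (product_topology (\<lambda>_. discrete_topology A) UNIV) (discrete_topology A) (\<lambda>x. x (i + j))"
      by (rule continuous_map_product_projection) simp
    then show "continuous_map (subtopology (product_topology (\<lambda>_. discrete_topology A) UNIV) X)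
        (discrete_topology A) (\<lambda>x. shift_by j x i)"
      unfolding shift_by_def by (rule continuous_map_from_subtopology)
  qed
  then show ?thesis
    using shift_by_in_X by (auto simp: continuous_map_in_subtopology)
qed

lemma cellular_automaton_continuous: "cellular_automaton A X F \<Longrightarrow> continuous_map TX TX F"
  by (simp add: cellular_automaton_def)

lemma cellular_automaton_in_X:
  assumes "cellular_automaton A X F" "x \<in> X"
  shows "F x \<in> X"
  using continuous_map_image_subset_topspace[OF cellular_automaton_continuous[OF assms(1)]] assms(2)
  by (auto simp: Int_absorb1[OF X_subset_topspace])

lemma funpow_cellular_automaton_in_X: "cellular_automaton A X F \<Longrightarrow> x \<in> X \<Longrightarrow> (F ^^ n) x \<in> X"
  by (induction n) (auto simp: cellular_automaton_in_X)

lemma cellular_automaton_shift_by: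
  assumes F: "cellular_automaton A X F" and "x \<in> X"
  shows "F (shift_by j x) = shift_by j (F x)"
proof (induction j rule: int_induct[where k = 0])
  case (step1 i)
  have "F (shift_by (i + 1) x) = F (shift (shift_by i x))"
    by (simp add: shift_by_add add.commute)
  also have "\<dots> = shift (F (shift_by i x))"
    using F shift_by_in_X[OF \<open>x \<in> X\<close>] by (simp add: cellular_automaton_def)
  finally show ?case
    using step1 by (simp add: shift_by_add add.commute)
next
  case (step2 i)
  have "F (shift_by i x) = F (shift (shift_by (i - 1) x))"
    by (simp add: shift_by_add)
  also have "\<dots> = shift (F (shift_by (i - 1) x))"
    using F shift_by_in_X[OF \<open>x \<in> X\<close>] by (simp add: cellular_automaton_def)
  finally have "F (shift_by (i - 1) x) = shift_by (-1) (shift_by i (F x))"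
    using step2 by (simp add: shift_by_add)
  then show ?case
    by (simp add: shift_by_add)
qed simp

lemma funpow_cellular_automaton_shift_by:
  assumes "cellular_automaton A X F" "x \<in> X"
  shows "(F ^^ n) (shift_by j x) = shift_by j ((F ^^ n) x)"
  using assms
  by (induction n) (simp_all add: cellular_automaton_shift_by funpow_cellular_automaton_in_X)

lemma cellular_automaton_comp_shift_by:
  assumes F: "cellular_automaton A X F"
  shows "cellular_automaton A X (F \<circ> shift_by j)"
proof -
  have "(F \<circ> shift_by j) (shift x) = shift ((F \<circ> shift_by j) x)" if "x \<in> X" for x
  proof -
    have "shift_by j (shift x) = shift (shift_by j x)"
      by (simp add: shift_by_add add.commute)
    then show ?thesis
      using F shift_by_in_X[OF that] by (simp add: cellular_automaton_def)
  qed
  then show ?thesis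
    using continuous_map_compose[OF continuous_map_shift_by cellular_automaton_continuous[OF F]]
    by (simp add: cellular_automaton_def)
qed

lemma funpow_comp_shift_by:
  assumes F: "cellular_automaton A X F" and x: "x \<in> X"
  shows "((F \<circ> shift_by j) ^^ n) x = (F ^^ n) (shift_by (j * int n) x)"
proof (induction n)
  case (Suc n)
  have "((F \<circ> shift_by j) ^^ Suc n) x = F (shift_by j ((F ^^ n) (shift_by (j * int n) x)))"
    by (simp add: Suc)
  also have "\<dots> = (F ^^ Suc n) (shift_by (j * int (Suc n)) x)"
    using funpow_cellular_automaton_shift_by[OF F shift_by_in_X[OF x]]
    by (simp add: shift_by_add algebra_simps)
  finally show ?case .
qed simp

definition cylinder :: "nat \<Rightarrow> (int \<Rightarrow> 'a) \<Rightarrow> (int \<Rightarrow> 'a) set" where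
  "cylinder m x = {y \<in> X. agree m x y}"

lemma cylinder_eq_full_shift_cylinder:
  "cylinder m x = {y \<in> topspace (full_shift_top A). agree m x y} \<inter> X"
  using X_subset_topspace by (auto simp: cylinder_def)

lemma openin_cylinder: "x \<in> X \<Longrightarrow> openin TX (cylinder m x)"
  unfolding cylinder_eq_full_shift_cylinder
  using X_subset_topspace by (intro openin_subtopology_Int openin_full_shift_cylinder) auto

lemma closedin_cylinder: "x \<in> X \<Longrightarrow> closedin TX (cylinder m x)"
  unfolding cylinder_eq_full_shift_cylinder Int_commute[of _ X]
  using X_subset_topspace by (intro closedin_subtopology_Int_closed closedin_full_shift_cylinder) auto

lemma center_in_cylinder: "x \<in> X \<Longrightarrow> x \<in> cylinder m x"
  by (simp add: cylinder_def)

lemma finite_cylinders: "finite (cylinder m ` X)"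
proof -
  let ?I = "{i. \<bar>i\<bar> \<le> int m}"
  let ?C = "\<lambda>u. {y \<in> X. \<forall>i\<in>?I. y i = u i}"
  have "cylinder m x \<in> ?C ` PiE ?I (\<lambda>_. A)" if "x \<in> X" for x
  proof (rule image_eqI)
    show "cylinder m x = ?C (restrict x ?I)"
      by (auto simp: cylinder_def agree_def)
    show "restrict x ?I \<in> PiE ?I (\<lambda>_. A)"
      using in_alphabet[OF that] by simp
  qed
  then have "cylinder m ` X \<subseteq> ?C ` PiE ?I (\<lambda>_. A)"
    by blast
  moreover have "finite ?I"
    by (rule finite_subset[of _ "{- int m..int m}"]) auto
  then have "finite (PiE ?I (\<lambda>_. A))"
    using finite_alphabet by (simp add: finite_PiE)
  ultimately show ?thesis
    using finite_subset by blast
qed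

lemma openin_contains_cylinder:
  assumes "openin TX U" "x \<in> U"
  shows "\<exists>m. cylinder m x \<subseteq> U"
proof -
  obtain V where V: "openin (full_shift_top A) V" "U = V \<inter> X"
    using assms(1) by (auto simp: openin_subtopology)
  then obtain m where "\<forall>y\<in>topspace (full_shift_top A). agree m x y \<longrightarrow> y \<in> V"
    using full_shift_open_contains_cylinder assms(2) by blast
  then have "cylinder m x \<subseteq> U"
    using V(2) X_subset_topspace by (auto simp: cylinder_def)
  then show ?thesis ..
qed

lemma uniform_cylinder_radius:
  assumes local: "\<And>x. x \<in> X \<Longrightarrow> \<exists>m. \<forall>y\<in>cylinder m x. P x y"
    and join: "\<And>x y z. P z x \<Longrightarrow> P z y \<Longrightarrow> Q x y"
  shows "\<exists>M. \<forall>x\<in>X. \<forall>y\<in>cylinder M x. Q x y"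
proof -
  obtain rad where rad: "\<And>x y. x \<in> X \<Longrightarrow> y \<in> cylinder (rad x) x \<Longrightarrow> P x y"
    using local by metis
  have "\<forall>\<U>. (\<forall>B\<in>\<U>. openin TX B) \<and> X \<subseteq> \<Union>\<U> \<longrightarrow> (\<exists>\<F>. finite \<F> \<and> \<F> \<subseteq> \<U> \<and> X \<subseteq> \<Union>\<F>)"
    using compactin_X unfolding compactin_def by (elim conjE) assumption
  moreover have "\<forall>B\<in>(\<lambda>x. cylinder (rad x) x) ` X. openin TX B"
    using openin_cylinder by blast
  moreover have "X \<subseteq> \<Union>((\<lambda>x. cylinder (rad x) x) ` X)"
    using center_in_cylinder by blast
  ultimately have "\<exists>\<F>. finite \<F> \<and> \<F> \<subseteq> (\<lambda>x. cylinder (rad x) x) ` X \<and> X \<subseteq> \<Union>\<F>"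
    by blast
  then obtain \<F> where \<F>: "finite \<F>" "\<F> \<subseteq> (\<lambda>x. cylinder (rad x) x) ` X" "X \<subseteq> \<Union>\<F>"
    by blast
  obtain Z where Z: "finite Z" "Z \<subseteq> X" "\<F> = (\<lambda>x. cylinder (rad x) x) ` Z"
    using finite_subset_image[OF \<F>(1,2)] by blast
  define M where "M = Max (insert 0 (rad ` Z))"
  have "Q x y" if "x \<in> X" "y \<in> cylinder M x" for x y
  proof -
    obtain z where z: "z \<in> Z" "x \<in> cylinder (rad z) z"
      using \<F>(3) Z(3) \<open>x \<in> X\<close> by blast
    have "rad z \<le> M"
      unfolding M_def using Z(1) z(1) by (intro Max_ge) auto
    then have "y \<in> cylinder (rad z) z"
      using z(2) that(2) by (auto simp: cylinder_def intro: agree_trans agree_mono)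
    then show ?thesis
      using join rad z Z(2) by blast
  qed
  then show ?thesis by blast
qed

lemma observable_uniformly_continuous:
  assumes f: "observable f" and "e > 0"
  shows "\<exists>M. \<forall>x\<in>X. \<forall>y\<in>cylinder M x. \<bar>f x - f y\<bar> < e"
proof (rule uniform_cylinder_radius)
  fix x
  assume "x \<in> X"
  have "openin TX {y \<in> topspace TX. f y \<in> ball (f x) (e / 2)}"
    by (rule openin_continuous_map_preimage[OF f]) simp
  then have "openin TX {y \<in> X. f y \<in> ball (f x) (e / 2)}"
    by (simp only: topspace_TX)
  moreover have "x \<in> {y \<in> X. f y \<in> ball (f x) (e / 2)}"
    using \<open>x \<in> X\<close> \<open>e > 0\<close> by simp
  ultimately obtain m where "cylinder m x \<subseteq> {y \<in> X. f y \<in> ball (f x) (e / 2)}"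
    using openin_contains_cylinder by blast
  then show "\<exists>m. \<forall>y\<in>cylinder m x. \<bar>f x - f y\<bar> < e / 2"
    by (auto simp: dist_real_def)
qed linarith

lemma observable_bounded:
  assumes f: "observable f"
  shows "\<exists>B. \<forall>x\<in>X. \<bar>f x\<bar> \<le> B"
proof -
  from image_compactin[OF compactin_X f] have "compact (f ` X)"
    by simp
  then show ?thesis
    by (auto simp: bounded_real dest: compact_imp_bounded)
qed

lemma observable_comp: "continuous_map TX TX g \<Longrightarrow> observable f \<Longrightarrow> observable (\<lambda>x. f (g x))"
  using continuous_map_compose[of TX TX g euclideanreal f] by (simp add: o_def)

lemma observable_comp_funpow:
  assumes "cellular_automaton A X F" "observable f"
  shows "observable (\<lambda>x. f ((F ^^ n) x))"
  using observable_comp[OF continuous_map_funpow[OF cellular_automaton_continuous[OF assms(1)]] assms(2)] .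

lemma cellular_automaton_uniform_at_origin:
  assumes G: "cellular_automaton A X G"
  shows "\<exists>\<rho>. \<forall>x\<in>X. \<forall>y\<in>cylinder \<rho> x. G x 0 = G y 0"
proof (rule uniform_cylinder_radius)
  have "continuous_map TX (full_shift_top A) G"
    using cellular_automaton_continuous[OF G] by (simp add: continuous_map_in_subtopology)
  then have "continuous_map TX (discrete_topology A) ((\<lambda>x. x 0) \<circ> G)"
    by (rule continuous_map_compose[OF _ continuous_map_full_shift_coordinate])
  then have G0: "continuous_map TX (discrete_topology A) (\<lambda>x. G x 0)"
    by (simp add: o_def)
  fix x
  assume "x \<in> X"
  then have "G x 0 \<in> A"
    using cellular_automaton_in_X[OF G] in_alphabet by blast
  then have "openin TX {y \<in> topspace TX. G y 0 \<in> {G x 0}}"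
    by (intro openin_continuous_map_preimage[OF G0]) simp
  then have "openin TX {y \<in> X. G y 0 = G x 0}"
    by (simp only: topspace_TX singleton_iff)
  then obtain m where "cylinder m x \<subseteq> {y \<in> X. G y 0 = G x 0}"
    using openin_contains_cylinder \<open>x \<in> X\<close> by blast
  then have "\<forall>y\<in>cylinder m x. G x 0 = G y 0"
    by auto
  then show "\<exists>m. \<forall>y\<in>cylinder m x. G x 0 = G y 0" ..
qed simp

lemma cellular_automaton_local_rule:
  assumes G: "cellular_automaton A X G"
  shows "\<exists>\<rho>. \<forall>x\<in>X. \<forall>y\<in>X. \<forall>j. (\<forall>i. \<bar>i - j\<bar> \<le> int \<rho> \<longrightarrow> x i = y i) \<longrightarrow> G x j = G y j"
proof -
  obtain \<rho> where \<rho>: "\<forall>x\<in>X. \<forall>y\<in>cylinder \<rho> x. G x 0 = G y 0"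
    using cellular_automaton_uniform_at_origin[OF G] by blast
  have "G x j = G y j" if "x \<in> X" "y \<in> X" "\<forall>i. \<bar>i - j\<bar> \<le> int \<rho> \<longrightarrow> x i = y i" for x y j
  proof -
    have "shift_by j y \<in> cylinder \<rho> (shift_by j x)"
      using that shift_by_in_X[OF that(2), of j] by (simp add: cylinder_def agree_def shift_by_def)
    then have "G (shift_by j x) 0 = G (shift_by j y) 0"
      using \<rho> shift_by_in_X[OF that(1)] by blast
    moreover have "G (shift_by j x) = shift_by j (G x)" "G (shift_by j y) = shift_by j (G y)"
      using cellular_automaton_shift_by[OF G] that(1,2) by blast+
    ultimately show ?thesis
      by (simp add: shift_by_def)
  qed
  then show ?thesis by blast
qed

lemma eventually_periodic_between_blocks:
  assumes G: "cellular_automaton A X G"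
    and local: "\<forall>x\<in>X. \<forall>y\<in>X. \<forall>j. (\<forall>i. \<bar>i - j\<bar> \<le> int \<rho> \<longrightarrow> x i = y i) \<longrightarrow> G x j = G y j"
    and block: "\<forall>y\<in>cylinder m x0. \<forall>n. agree \<rho> ((G ^^ n) x0) ((G ^^ n) y)"
    and x: "x \<in> X" and a: "shift_by a x \<in> cylinder m x0" and b: "shift_by b x \<in> cylinder m x0"
    and gap: "a + int \<rho> \<le> b"
  shows "\<exists>n0 p. p > 0 \<and> (\<forall>n\<ge>n0. \<forall>q. \<forall>j\<in>{a..b}. (G ^^ (n + q * p)) x j = (G ^^ n) x j)"
proof -
  define Y where "Y n = (G ^^ n) x" for n
  have Y_in_X: "Y n \<in> X" for n
    unfolding Y_def using funpow_cellular_automaton_in_X[OF G x] .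
  have block_pattern: "Y n (c + i) = (G ^^ n) x0 i"
    if "shift_by c x \<in> cylinder m x0" "\<bar>i\<bar> \<le> int \<rho>" for c n i
    using block that funpow_cellular_automaton_shift_by[OF G x, of n c]
    by (auto simp: agree_def Y_def shift_by_def add.commute)
  have "\<exists>n0 p. p > 0 \<and> (\<forall>n\<ge>n0. \<forall>q. \<forall>j\<in>{a..b}. Y (n + q * p) j = Y n j)"
  proof (rule eventually_periodic_between_repetitions[OF finite_alphabet _ _ gap])
    show "Y n j \<in> A" for n j
      using in_alphabet[OF Y_in_X] .
    show "Y (Suc n) j = Y (Suc n') j" if "\<And>i. \<bar>i - j\<bar> \<le> int \<rho> \<Longrightarrow> Y n i = Y n' i" for n n' j
      using local Y_in_X that by (simp add: Y_def)
    show "Y n (a + i) = Y n (b + i)" if "\<bar>i\<bar> \<le> int \<rho>" for n i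
      using block_pattern[OF a that] block_pattern[OF b that] by simp
  qed
  then show ?thesis
    by (simp add: Y_def)
qed

section \<open>Borel probability measures on a subshift\<close>

lemma openin_in_borel_sets: "openin TX U \<Longrightarrow> U \<in> borel_sets_on A X"
  by (simp add: borel_sets_on_def sigma_sets.Basic)

lemma borel_measurable_observable:
  assumes M: "space M = X" "sets M = borel_sets_on A X" and f: "observable f"
  shows "f \<in> borel_measurable M"
proof (rule borel_measurableI)
  fix S :: "real set"
  assume "open S"
  then have "openin TX {x \<in> topspace TX. f x \<in> S}"
    by (intro openin_continuous_map_preimage[OF f]) (simp add: open_openin[symmetric])
  moreover have "{x \<in> topspace TX. f x \<in> S} = f -` S \<inter> space M"
    unfolding topspace_TX M(1) by blast
  ultimately show "f -` S \<inter> space M \<in> sets M"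
    unfolding M(2) by (simp add: openin_in_borel_sets)
qed

lemma measurable_continuous_self_map:
  assumes M: "space M = X" "sets M = borel_sets_on A X" and g: "continuous_map TX TX g"
  shows "g \<in> M \<rightarrow>\<^sub>M M"
proof (rule measurable_sigma_sets)
  show "sets M = sigma_sets X {U. openin TX U}"
    using M(2) by (simp add: borel_sets_on_def)
  show "{U. openin TX U} \<subseteq> Pow X"
    using openin_subset[where U = TX] by (auto simp only: topspace_TX)
  show "g \<in> space M \<rightarrow> X"
    using continuous_map_image_subset_topspace[OF g] M(1) by (auto simp only: topspace_TX)
  fix U
  assume "U \<in> {U. openin TX U}"
  then have "openin TX {x \<in> topspace TX. g x \<in> U}"
    by (intro openin_continuous_map_preimage[OF g]) simp
  moreover have "{x \<in> topspace TX. g x \<in> U} = g -` U \<inter> space M"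
    unfolding topspace_TX M(1) by blast
  ultimately show "g -` U \<inter> space M \<in> sets M"
    unfolding M(2) by (simp add: openin_in_borel_sets)
qed

lemma integrable_observable:
  assumes M: "borel_prob_on A X M" and f: "observable f"
  shows "integrable M f"
proof -
  interpret prob_space M
    using M by (simp add: borel_prob_on_def)
  obtain B where "\<forall>x\<in>X. \<bar>f x\<bar> \<le> B"
    using observable_bounded[OF f] by blast
  then show ?thesis
    using M borel_measurable_observable[OF _ _ f]
    by (intro integrable_const_bound[where B = B]) (auto simp: borel_prob_on_def)
qed

lemma borel_prob_on_distr:
  assumes M: "borel_prob_on A X M" and g: "continuous_map TX TX g"
  shows "borel_prob_on A X (distr M M g)"
proof -
  interpret prob_space M
    using M by (simp add: borel_prob_on_def)
  show ?thesis
    using M prob_space_distr measurable_continuous_self_map[OF _ _ g]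
    by (auto simp: borel_prob_on_def)
qed

definition clopens :: "(int \<Rightarrow> 'a) set set" where
  "clopens = {S. openin TX S \<and> closedin TX S}"

lemma clopens_subset: "S \<in> clopens \<Longrightarrow> S \<subseteq> X"
  using openin_subset[of TX S] by (simp add: clopens_def)

lemma ring_of_sets_clopens: "ring_of_sets X clopens"
proof (rule ring_of_setsI)
  show "clopens \<subseteq> Pow X"
    using clopens_subset by blast
qed (auto simp: clopens_def intro: openin_Un closedin_Un openin_diff closedin_diff)

lemma X_in_clopens: "X \<in> clopens"
  using openin_topspace[of TX] closedin_topspace[of TX] by (simp add: clopens_def)

lemma Int_stable_clopens: "Int_stable clopens"
  by (auto simp: Int_stable_def clopens_def intro: openin_Int closedin_Int)

lemma cylinder_in_clopens: "x \<in> X \<Longrightarrow> cylinder m x \<in> clopens"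
  by (simp add: clopens_def openin_cylinder closedin_cylinder)

lemma observable_indicator:
  assumes S: "S \<in> clopens"
  shows "observable (indicator S)"
  unfolding continuous_map
proof (intro conjI allI impI)
  show "indicator S ` topspace TX \<subseteq> topspace euclideanreal"
    by simp
  fix U :: "real set"
  have "openin TX (X - S)"
    using openin_diff[OF openin_topspace[of TX], of S] S by (simp add: clopens_def)
  moreover have "openin TX X"
    using openin_topspace[of TX] by simp
  ultimately have "\<forall>V\<in>{{}, S, X - S, X}. openin TX V"
    using S by (simp add: clopens_def)
  moreover have "{x \<in> topspace TX. indicator S x \<in> U} \<in> {{}, S, X - S, X}"
    using clopens_subset[OF S] by (auto simp: indicator_def)
  ultimately show "openin TX {x \<in> topspace TX. indicator S x \<in> U}"
    by blast
qed

lemma sigma_sets_clopens: "sigma_sets X clopens = borel_sets_on A X"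
proof
  show "sigma_sets X clopens \<subseteq> borel_sets_on A X"
    unfolding borel_sets_on_def by (rule sigma_sets_subseteq) (auto simp: clopens_def)
  show "borel_sets_on A X \<subseteq> sigma_sets X clopens"
    unfolding borel_sets_on_def
  proof (rule sigma_sets_mono, rule subsetI)
    fix U
    assume "U \<in> {U. openin TX U}"
    then have U: "openin TX U" by simp
    then have "U \<subseteq> X"
      using openin_subset[OF U] by simp
    define V where "V m = \<Union>(cylinder m ` {x \<in> U. cylinder m x \<subseteq> U})" for m
    have "V m \<in> clopens" for m
    proof -
      have "cylinder m ` {x \<in> U. cylinder m x \<subseteq> U} \<subseteq> cylinder m ` X"
        using \<open>U \<subseteq> X\<close> by (intro image_mono) auto
      then have "finite (cylinder m ` {x \<in> U. cylinder m x \<subseteq> U})"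
        using finite_cylinders by (rule finite_subset)
      moreover have "cylinder m ` {x \<in> U. cylinder m x \<subseteq> U} \<subseteq> clopens"
        using cylinder_in_clopens \<open>U \<subseteq> X\<close> by auto
      ultimately show ?thesis
        unfolding V_def by (rule ring_of_sets.finite_Union[OF ring_of_sets_clopens])
    qed
    moreover have "U = (\<Union>m. V m)"
    proof (intro equalityI subsetI)
      fix x
      assume "x \<in> U"
      then obtain m where "cylinder m x \<subseteq> U"
        using openin_contains_cylinder[OF U] by blast
      moreover have "x \<in> cylinder m x"
        using \<open>x \<in> U\<close> \<open>U \<subseteq> X\<close> center_in_cylinder by blast
      ultimately show "x \<in> (\<Union>m. V m)"
        using \<open>x \<in> U\<close> unfolding V_def by blast
    qed (auto simp: V_def)
    ultimately show "U \<in> sigma_sets X clopens"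
      by (auto intro: sigma_sets.Union sigma_sets.Basic)
  qed
qed

lemma cylinder_eq_of_mem: "y \<in> cylinder m x \<Longrightarrow> cylinder m y = cylinder m x"
  unfolding cylinder_def by (auto intro: agree_trans agree_sym)

lemma observable_approx_by_clopen_steps:
  assumes f: "observable f" and "e > 0"
  shows "\<exists>P c. finite P \<and> P \<subseteq> clopens \<and> (\<forall>x\<in>X. \<bar>f x - (\<Sum>S\<in>P. c S * indicator S x)\<bar> < e)"
proof -
  obtain m where m: "\<And>x y. x \<in> X \<Longrightarrow> y \<in> cylinder m x \<Longrightarrow> \<bar>f x - f y\<bar> < e"
    using observable_uniformly_continuous[OF f \<open>e > 0\<close>] by blast
  define P where "P = cylinder m ` X"
  define c where "c S = f (SOME y. y \<in> S)" for S
  have "\<bar>f x - (\<Sum>S\<in>P. c S * indicator S x)\<bar> < e" if "x \<in> X" for x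
  proof -
    have "x \<in> S \<longleftrightarrow> S = cylinder m x" if "S \<in> P" for S
    proof -
      obtain z where "S = cylinder m z"
        using \<open>S \<in> P\<close> by (auto simp: P_def)
      then show ?thesis
        using cylinder_eq_of_mem[of x m z] center_in_cylinder[OF \<open>x \<in> X\<close>] by auto
    qed
    then have "indicator S x = (if S = cylinder m x then 1 else 0 :: real)" if "S \<in> P" for S
      using that by (simp add: indicator_def)
    then have "(\<Sum>S\<in>P. c S * indicator S x) = (\<Sum>S\<in>P. if S = cylinder m x then c S else 0)"
      by (intro sum.cong) simp_all
    also have "\<dots> = c (cylinder m x)"
      using finite_cylinders \<open>x \<in> X\<close> by (simp add: P_def)
    finally have "(\<Sum>S\<in>P. c S * indicator S x) = f (SOME y. y \<in> cylinder m x)"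
      by (simp add: c_def)
    moreover have "(SOME y. y \<in> cylinder m x) \<in> cylinder m x"
      using center_in_cylinder[OF \<open>x \<in> X\<close>, of m] some_in_eq by blast
    ultimately show ?thesis
      using m[OF \<open>x \<in> X\<close>] by simp
  qed
  moreover have "finite P" "P \<subseteq> clopens"
    using finite_cylinders cylinder_in_clopens by (auto simp: P_def)
  ultimately show ?thesis by blast
qed

lemma borel_prob_eqI_clopens:
  assumes M: "borel_prob_on A X M" and N: "borel_prob_on A X N"
    and eq: "\<And>S. S \<in> clopens \<Longrightarrow> emeasure M S = emeasure N S"
  shows "M = N"
proof (rule measure_eqI_generator_eq_countable[OF Int_stable_clopens _ eq])
  interpret prob_space M
    using M by (simp add: borel_prob_on_def)
  show "clopens \<subseteq> Pow X"
    using clopens_subset by blast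
  show "sets M = sigma_sets X clopens" "sets N = sigma_sets X clopens"
    using M N by (simp_all add: borel_prob_on_def sigma_sets_clopens)
  show "{X} \<subseteq> clopens" "\<Union>{X} = X" "countable {X}"
    using X_in_clopens by auto
  show "emeasure M S \<noteq> \<infinity>" for S
    by simp
qed

lemma invariant_measure_if_integral_comp_eq:
  assumes M: "borel_prob_on A X M" and T: "continuous_map TX TX T"
    and eq: "\<And>f. observable f \<Longrightarrow> (\<integral>x. f (T x) \<partial>M) = (\<integral>x. f x \<partial>M)"
  shows "invariant_measure M T"
proof -
  have space: "space M = X" and sets: "sets M = borel_sets_on A X"
    using M by (auto simp: borel_prob_on_def)
  interpret prob_space M
    using M by (simp add: borel_prob_on_def)
  have T_meas: "T \<in> M \<rightarrow>\<^sub>M M"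
    by (rule measurable_continuous_self_map[OF space sets T])
  interpret D: prob_space "distr M M T"
    by (rule prob_space_distr[OF T_meas])
  have "distr M M T = M"
  proof (rule borel_prob_eqI_clopens[OF borel_prob_on_distr[OF M T] M])
    fix S
    assume S: "S \<in> clopens"
    have "measure (distr M M T) S = (\<integral>x. indicator S x \<partial>distr M M T)"
      using clopens_subset[OF S] space by (simp add: Int_absorb2)
    also have "\<dots> = (\<integral>x. indicator S (T x) \<partial>M)"
      by (rule integral_distr[OF T_meas borel_measurable_observable[OF space sets observable_indicator[OF S]]])
    also have "\<dots> = (\<integral>x. indicator S x \<partial>M)"
      by (rule eq[OF observable_indicator[OF S]])
    also have "\<dots> = measure M S"
      using clopens_subset[OF S] space by (simp add: Int_absorb2)
    finally show "emeasure (distr M M T) S = emeasure M S"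
      by (simp add: D.emeasure_eq_measure emeasure_eq_measure)
  qed
  then show ?thesis
    using T_meas by (simp add: invariant_measure_def)
qed

end

section \<open>Positive functionals are integrals\<close>

locale positive_functional = subshift_space +
  fixes \<Phi> :: "((int \<Rightarrow> 'a) \<Rightarrow> real) \<Rightarrow> real"
  assumes functional_add: "\<And>f g. observable f \<Longrightarrow> observable g \<Longrightarrow> \<Phi> (\<lambda>x. f x + g x) = \<Phi> f + \<Phi> g"
    and functional_scale: "\<And>c f. observable f \<Longrightarrow> \<Phi> (\<lambda>x. c * f x) = c * \<Phi> f"
    and functional_nonneg: "\<And>f. observable f \<Longrightarrow> (\<And>x. x \<in> X \<Longrightarrow> f x \<ge> 0) \<Longrightarrow> \<Phi> f \<ge> 0"
    and functional_one: "\<Phi> (\<lambda>_. 1) = 1"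
begin

lemma functional_const: "\<Phi> (\<lambda>_. c) = c"
  using functional_scale[of "\<lambda>_. 1" c] functional_one by simp

lemma functional_diff:
  assumes f: "observable f" and g: "observable g"
  shows "\<Phi> (\<lambda>x. f x - g x) = \<Phi> f - \<Phi> g"
proof -
  have "\<Phi> f = \<Phi> (\<lambda>x. (f x - g x) + g x)"
    by simp
  also have "\<dots> = \<Phi> (\<lambda>x. f x - g x) + \<Phi> g"
    using f g by (intro functional_add continuous_map_diff)
  finally show ?thesis by simp
qed

lemma functional_mono:
  assumes f: "observable f" and g: "observable g" and le: "\<And>x. x \<in> X \<Longrightarrow> f x \<le> g x"
  shows "\<Phi> f \<le> \<Phi> g"
  using functional_nonneg[of "\<lambda>x. g x - f x"] functional_diff[OF g f] le
    continuous_map_diff[OF g f] by simp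

lemma functional_cong:
  assumes "observable f" "observable g" "\<And>x. x \<in> X \<Longrightarrow> f x = g x"
  shows "\<Phi> f = \<Phi> g"
  using functional_mono[of f g] functional_mono[of g f] assms by (simp add: order_antisym)

lemma functional_abs_le:
  assumes f: "observable f" and bound: "\<And>x. x \<in> X \<Longrightarrow> \<bar>f x\<bar> \<le> e"
  shows "\<bar>\<Phi> f\<bar> \<le> e"
proof -
  have "- e \<le> f x" "f x \<le> e" if "x \<in> X" for x
    using bound[OF that] by linarith+
  then have "\<Phi> f \<le> \<Phi> (\<lambda>_. e)" "\<Phi> (\<lambda>_. - e) \<le> \<Phi> f"
    by (simp_all add: functional_mono f)
  then show ?thesis
    by (simp add: functional_const abs_le_iff)
qed

lemma functional_sum:
  assumes "finite P" and "\<And>S. S \<in> P \<Longrightarrow> observable (h S)"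
  shows "\<Phi> (\<lambda>x. \<Sum>S\<in>P. h S x) = (\<Sum>S\<in>P. \<Phi> (h S))"
  using assms
proof (induction P rule: finite_induct)
  case empty
  show ?case using functional_const[of 0] by simp
next
  case (insert S P)
  then have "\<Phi> (\<lambda>x. h S x + (\<Sum>S\<in>P. h S x)) = \<Phi> (h S) + \<Phi> (\<lambda>x. \<Sum>S\<in>P. h S x)"
    by (intro functional_add continuous_map_sum) auto
  with insert show ?case by simp
qed

lemma functional_indicator_nonneg: "S \<in> clopens \<Longrightarrow> \<Phi> (indicator S) \<ge> 0"
  by (rule functional_nonneg[OF observable_indicator]) auto

lemma functional_indicator_Un:
  assumes "a \<in> clopens" "b \<in> clopens" "a \<inter> b = {}"
  shows "\<Phi> (indicator (a \<union> b)) = \<Phi> (indicator a) + \<Phi> (indicator b)"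
proof -
  have "indicator (a \<union> b) = (\<lambda>x. indicator a x + indicator b x :: real)"
    using assms(3) by (auto simp: indicator_def fun_eq_iff)
  then show ?thesis
    using assms(1,2) by (simp add: functional_add observable_indicator)
qed

lemma positive_functional_indicator: "positive clopens (\<lambda>S. ennreal (\<Phi> (indicator S)))"
proof -
  have "indicator ({} :: (int \<Rightarrow> 'a) set) = (\<lambda>_. 0 :: real)"
    by (rule ext) simp
  then show ?thesis
    unfolding positive_def using functional_const[of 0] by simp
qed

lemma additive_functional_indicator: "additive clopens (\<lambda>S. ennreal (\<Phi> (indicator S)))"
  by (auto simp: additive_def functional_indicator_Un functional_indicator_nonneg ennreal_plus)

lemma countably_additive_functional_indicator:
  "countably_additive clopens (\<lambda>S. ennreal (\<Phi> (indicator S)))"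
  unfolding countably_additive_def
proof (intro allI impI)
  fix F :: "nat \<Rightarrow> (int \<Rightarrow> 'a) set"
  assume F: "range F \<subseteq> clopens" "disjoint_family F" "(\<Union>i. F i) \<in> clopens"
  let ?\<mu> = "\<lambda>S. ennreal (\<Phi> (indicator S))"
  have "compactin TX (\<Union>i. F i)"
    using F(3) compact_space_TX closedin_compact_space by (auto simp: clopens_def)
  then obtain N where N: "\<And>i. i \<ge> N \<Longrightarrow> F i = {}"
    using compactin_disjoint_open_family_eventually_empty[of TX F] F(1,2)
    by (auto simp: clopens_def)
  have "(\<Sum>i. ?\<mu> (F i)) = (\<Sum>i<N. ?\<mu> (F i))"
    using N positive_functional_indicator by (intro suminf_finite) (auto simp: positive_def)
  also have "\<dots> = ?\<mu> (\<Union>i<N. F i)"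
    using F(1,2) disjoint_family_on_mono[of "{..<N}" UNIV F]
    by (intro ring_of_sets.additive_sum[OF ring_of_sets_clopens positive_functional_indicator
          additive_functional_indicator]) auto
  also have "(\<Union>i<N. F i) = (\<Union>i. F i)"
  proof (intro equalityI subsetI)
    fix x
    assume "x \<in> (\<Union>i. F i)"
    then obtain i where "x \<in> F i" by blast
    with N have "i < N" by (metis empty_iff not_le)
    with \<open>x \<in> F i\<close> show "x \<in> (\<Union>i<N. F i)" by blast
  qed auto
  finally show "(\<Sum>i. ?\<mu> (F i)) = ?\<mu> (\<Union>i. F i)" .
qed

lemma exists_measure_extending_functional:
  "\<exists>M. borel_prob_on A X M \<and> (\<forall>S\<in>clopens. measure M S = \<Phi> (indicator S))"
proof -
  obtain \<mu> where \<mu>: "\<forall>S\<in>clopens. \<mu> S = ennreal (\<Phi> (indicator S))"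
    "measure_space X (sigma_sets X clopens) \<mu>"
    using ring_of_sets.caratheodory'[OF ring_of_sets_clopens positive_functional_indicator
        countably_additive_functional_indicator] by blast
  have sa: "sigma_algebra X (sigma_sets X clopens)"
    and pos: "positive (sigma_sets X clopens) \<mu>"
    and ca: "countably_additive (sigma_sets X clopens) \<mu>"
    using \<mu>(2) by (auto simp: measure_space_def)
  define M where "M = measure_of X (sigma_sets X clopens) \<mu>"
  have sets: "sets M = borel_sets_on A X" and space: "space M = X"
    unfolding M_def using sigma_algebra.sets_measure_of_eq[OF sa] sigma_algebra.space_measure_of_eq[OF sa]
    by (simp_all add: sigma_sets_clopens)
  have emeasure: "emeasure M S = ennreal (\<Phi> (indicator S))" if "S \<in> clopens" for S
    unfolding M_def using emeasure_measure_of_sigma[OF sa pos ca sigma_sets.Basic[OF that]] \<mu>(1) that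
    by simp
  have "\<Phi> (indicator X) = \<Phi> (\<lambda>_. 1)"
    using observable_indicator[OF X_in_clopens] by (intro functional_cong) auto
  then have "emeasure M (space M) = 1"
    using emeasure[OF X_in_clopens] space by (simp add: functional_one)
  then have "prob_space M"
    by (rule prob_spaceI)
  moreover have "measure M S = \<Phi> (indicator S)" if "S \<in> clopens" for S
    using emeasure[OF that] functional_indicator_nonneg[OF that] by (simp add: measure_def)
  ultimately show ?thesis
    using sets space by (auto simp: borel_prob_on_def)
qed

lemma integral_eq_functional:
  assumes M: "borel_prob_on A X M" and clopen: "\<And>S. S \<in> clopens \<Longrightarrow> measure M S = \<Phi> (indicator S)"
    and f: "observable f"
  shows "integral\<^sup>L M f = \<Phi> f"
proof -
  interpret prob_space M
    using M by (simp add: borel_prob_on_def)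
  have space: "space M = X"
    using M by (simp add: borel_prob_on_def)
  have "\<bar>integral\<^sup>L M f - \<Phi> f\<bar> \<le> e" if "e > 0" for e
  proof -
    obtain P c where P: "finite P" "P \<subseteq> clopens"
      and approx: "\<And>x. x \<in> X \<Longrightarrow> \<bar>f x - (\<Sum>S\<in>P. c S * indicator S x)\<bar> < e / 2"
      using observable_approx_by_clopen_steps[OF f, of "e / 2"] \<open>e > 0\<close> by (meson half_gt_zero)
    define g where "g x = (\<Sum>S\<in>P. c S * indicator S x)" for x
    have step: "observable (\<lambda>x. c S * indicator S x)" if "S \<in> P" for S
      using P that by (intro continuous_map_real_mult_left observable_indicator) auto
    have g: "observable g"
      unfolding g_def using P(1) step by (intro continuous_map_sum) auto
    have "integral\<^sup>L M g = (\<Sum>S\<in>P. integral\<^sup>L M (\<lambda>x. c S * indicator S x))"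
      unfolding g_def by (rule Bochner_Integration.integral_sum) (rule integrable_observable[OF M step])
    also have "\<dots> = (\<Sum>S\<in>P. c S * \<Phi> (indicator S))"
      using P clopens_subset clopen space by (intro sum.cong) (auto simp: Int_absorb2)
    also have "\<dots> = (\<Sum>S\<in>P. \<Phi> (\<lambda>x. c S * indicator S x))"
      using P by (intro sum.cong refl) (metis functional_scale observable_indicator subsetD)
    also have "\<dots> = \<Phi> g"
      unfolding g_def by (rule functional_sum[symmetric, OF P(1) step])
    finally have g_eq: "integral\<^sup>L M g = \<Phi> g" .
    have close: "\<bar>f x - g x\<bar> \<le> e / 2" if "x \<in> X" for x
      using approx[OF that] by (simp add: g_def)
    then have "\<bar>integral\<^sup>L M (\<lambda>x. f x - g x)\<bar> \<le> e / 2"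
      using integrable_observable[OF M continuous_map_diff[OF f g]] space
      by (intro abs_integral_le_const) auto
    moreover have "integral\<^sup>L M (\<lambda>x. f x - g x) = integral\<^sup>L M f - integral\<^sup>L M g"
      using integrable_observable[OF M f] integrable_observable[OF M g] by simp
    moreover have "\<bar>\<Phi> f - \<Phi> g\<bar> \<le> e / 2"
      using functional_abs_le[OF continuous_map_diff[OF f g] close] by (simp add: functional_diff[OF f g])
    ultimately show ?thesis
      using g_eq by linarith
  qed
  then show ?thesis
    using dense_eq0_I[of "integral\<^sup>L M f - \<Phi> f"] by simp
qed

lemma exists_representing_measure:
  "\<exists>M. borel_prob_on A X M \<and> (\<forall>f. observable f \<longrightarrow> integral\<^sup>L M f = \<Phi> f)"
  using exists_measure_extending_functional integral_eq_functional by blast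

end

lemma (in subshift_space) positive_functional_cesaro_limit:
  assumes \<nu>: "\<And>i. borel_prob_on A X (\<nu> i)"
    and convergent: "\<And>f. observable f \<Longrightarrow> convergent (cesaro_mean (\<lambda>i. integral\<^sup>L (\<nu> i) f))"
  shows "positive_functional A X (\<lambda>f. lim (cesaro_mean (\<lambda>i. integral\<^sup>L (\<nu> i) f)))"
    (is "positive_functional A X ?\<Phi>")
proof
  have lim: "cesaro_mean (\<lambda>i. integral\<^sup>L (\<nu> i) f) \<longlonglongrightarrow> ?\<Phi> f" if "observable f" for f
    using convergent[OF that] by (simp add: convergent_LIMSEQ_iff)
  fix f g c
  assume f: "observable f" and g: "observable g"
  have "cesaro_mean (\<lambda>i. integral\<^sup>L (\<nu> i) (\<lambda>x. f x + g x)) =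
      (\<lambda>n. cesaro_mean (\<lambda>i. integral\<^sup>L (\<nu> i) f) n + cesaro_mean (\<lambda>i. integral\<^sup>L (\<nu> i) g) n)"
    using integrable_observable[OF \<nu> f] integrable_observable[OF \<nu> g]
    by (simp add: cesaro_mean_add[symmetric])
  also have "\<dots> \<longlonglongrightarrow> ?\<Phi> f + ?\<Phi> g"
    by (intro tendsto_add lim f g)
  finally show "?\<Phi> (\<lambda>x. f x + g x) = ?\<Phi> f + ?\<Phi> g"
    by (rule limI)
  have "cesaro_mean (\<lambda>i. integral\<^sup>L (\<nu> i) (\<lambda>x. c * f x)) = (\<lambda>n. c * cesaro_mean (\<lambda>i. integral\<^sup>L (\<nu> i) f) n)"
    by (simp add: cesaro_mean_cmult[symmetric])
  also have "\<dots> \<longlonglongrightarrow> c * ?\<Phi> f"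
    by (intro tendsto_mult_left lim f)
  finally show "?\<Phi> (\<lambda>x. c * f x) = c * ?\<Phi> f"
    by (rule limI)
next
  fix f
  assume f: "observable f" and nonneg: "\<And>x. x \<in> X \<Longrightarrow> f x \<ge> 0"
  have "cesaro_mean (\<lambda>i. integral\<^sup>L (\<nu> i) f) n \<ge> 0" for n
    using nonneg \<nu> by (intro cesaro_mean_nonneg Bochner_Integration.integral_nonneg) (auto simp: borel_prob_on_def)
  then show "?\<Phi> f \<ge> 0"
    using LIMSEQ_le_const convergent[OF f] by (metis convergent_LIMSEQ_iff)
next
  have "prob_space (\<nu> i)" for i
    using \<nu> by (simp add: borel_prob_on_def)
  then have "cesaro_mean (\<lambda>i. integral\<^sup>L (\<nu> i) (\<lambda>_. 1)) = cesaro_mean (\<lambda>_. 1)"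
    by (simp add: prob_space.prob_space)
  then show "?\<Phi> (\<lambda>_. 1) = 1"
    using cesaro_mean_const_tendsto by (simp add: limI)
qed

lemma (in subshift_space) cesaro_vague_limit:
  assumes \<nu>: "\<And>i. borel_prob_on A X (\<nu> i)"
    and convergent: "\<And>f. observable f \<Longrightarrow> convergent (cesaro_mean (\<lambda>i. integral\<^sup>L (\<nu> i) f))"
  shows "\<exists>\<mu>. borel_prob_on A X \<mu> \<and>
    (\<forall>f. observable f \<longrightarrow> cesaro_mean (\<lambda>i. integral\<^sup>L (\<nu> i) f) \<longlonglongrightarrow> integral\<^sup>L \<mu> f)"
proof -
  interpret positive_functional A X "\<lambda>f. lim (cesaro_mean (\<lambda>i. integral\<^sup>L (\<nu> i) f))"
    by (rule positive_functional_cesaro_limit[OF \<nu> convergent])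
  obtain \<mu> where "borel_prob_on A X \<mu>"
    and "\<And>f. observable f \<Longrightarrow> integral\<^sup>L \<mu> f = lim (cesaro_mean (\<lambda>i. integral\<^sup>L (\<nu> i) f))"
    using exists_representing_measure by blast
  then show ?thesis
    using convergent by (auto simp: convergent_LIMSEQ_iff)
qed

section \<open>Ergodic measures and equicontinuous cellular automata\<close>

locale ergodic_subshift = subshift_space +
  fixes \<mu> :: "(int \<Rightarrow> 'a) measure"
  assumes borel_prob: "borel_prob_on A X \<mu>" and ergodic: "shift_ergodic \<mu>"
begin

sublocale prob_space \<mu>
  using borel_prob by (simp add: borel_prob_on_def)

lemma space_eq [simp]: "space \<mu> = X"
  using borel_prob by (simp add: borel_prob_on_def)

lemma sets_eq: "sets \<mu> = borel_sets_on A X"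
  using borel_prob by (simp add: borel_prob_on_def)

lemma measurable_shift_by: "shift_by j \<in> \<mu> \<rightarrow>\<^sub>M \<mu>"
  by (rule measurable_continuous_self_map[OF space_eq sets_eq continuous_map_shift_by])

lemma ergodic_map_shift: "ergodic_map \<mu> shift"
  using ergodic by (simp add: shift_ergodic_iff_ergodic_map)

lemma ergodic_map_shift_inverse: "ergodic_map \<mu> (shift_by (-1))"
proof (rule ergodic_map_left_inverse[OF ergodic_map_shift measurable_shift_by])
  show "shift_by (-1) (shift x) = x" for x
    by (simp add: shift_by_add)
qed

lemma distr_shift_by: "distr \<mu> \<mu> (shift_by j) = \<mu>"
proof (cases "j \<ge> 0")
  case True
  have "shift_by j = shift ^^ nat j"
    using True by (intro ext) (simp add: funpow_shift_by)
  moreover have "shift \<in> \<mu> \<rightarrow>\<^sub>M \<mu>" "distr \<mu> \<mu> shift = \<mu>"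
    using ergodic_map_shift unfolding ergodic_map_def by blast+
  ultimately show ?thesis
    using distr_funpow_eq by metis
next
  case False
  have "shift_by j = shift_by (-1) ^^ nat (- j)"
    using False by (intro ext) (simp add: funpow_shift_by)
  moreover have "shift_by (-1) \<in> \<mu> \<rightarrow>\<^sub>M \<mu>" "distr \<mu> \<mu> (shift_by (-1)) = \<mu>"
    using ergodic_map_shift_inverse unfolding ergodic_map_def by blast+
  ultimately show ?thesis
    using distr_funpow_eq by metis
qed

lemma integral_shift_by:
  fixes f :: "(int \<Rightarrow> 'a) \<Rightarrow> real"
  assumes "f \<in> borel_measurable \<mu>"
  shows "(\<integral>x. f (shift_by j x) \<partial>\<mu>) = integral\<^sup>L \<mu> f"
  using integral_distr[OF measurable_shift_by assms] by (simp add: distr_shift_by)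

lemma integral_distr_funpow:
  assumes F: "cellular_automaton A X F" and f: "observable f"
  shows "integral\<^sup>L (distr \<mu> \<mu> (F ^^ i)) f = (\<integral>x. f ((F ^^ i) x) \<partial>\<mu>)"
  using measurable_continuous_self_map[OF space_eq sets_eq continuous_map_funpow[OF cellular_automaton_continuous[OF F]]]
    borel_measurable_observable[OF space_eq sets_eq f]
  by (rule integral_distr)

lemma AE_recurrence_both_sides:
  assumes "C \<in> sets \<mu>" "emeasure \<mu> C \<noteq> 0"
  shows "AE x in \<mu>. \<forall>N. (\<exists>b\<ge>int N. shift_by b x \<in> C) \<and> (\<exists>a\<le>- int N. shift_by a x \<in> C)"
proof -
  have "AE x in \<mu>. \<forall>N. \<exists>n\<ge>N. (shift ^^ n) x \<in> C"
    using AE_ergodic_recurrence[OF ergodic_map_shift assms] .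
  moreover have "AE x in \<mu>. \<forall>N. \<exists>n\<ge>N. (shift_by (-1) ^^ n) x \<in> C"
    using AE_ergodic_recurrence[OF ergodic_map_shift_inverse assms] .
  ultimately show ?thesis
  proof eventually_elim
    case (elim x)
    show ?case
    proof
      fix N
      obtain n n' where "n \<ge> N" "shift_by (int n) x \<in> C" "n' \<ge> N" "shift_by (- int n') x \<in> C"
        using elim by (metis funpow_shift_by mult_1 mult_minus1)
      then show "(\<exists>b\<ge>int N. shift_by b x \<in> C) \<and> (\<exists>a\<le>- int N. shift_by a x \<in> C)"
        by (intro conjI exI[of _ "int n"] exI[of _ "- int n'"]) auto
    qed
  qed
qed

end

locale equicontinuous_ca = ergodic_subshift +
  fixes G :: "(int \<Rightarrow> 'a) \<Rightarrow> int \<Rightarrow> 'a"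
  assumes cellular_automaton: "cellular_automaton A X G"
    and equicontinuous: "equicontinuous_measure \<mu> X G"
begin

lemma equicont_point_blocking:
  assumes "equicont_point X G x"
  shows "\<exists>m. \<forall>y\<in>cylinder m x. \<forall>n. agree r ((G ^^ n) x) ((G ^^ n) y)"
proof -
  have "(1/2::real) ^ Suc r > 0"
    by simp
  then obtain \<eta> where "\<eta> > 0"
    and \<eta>: "\<forall>y\<in>X. cdist x y \<le> \<eta> \<longrightarrow> (\<forall>i>0. cdist ((G ^^ i) x) ((G ^^ i) y) \<le> (1/2) ^ Suc r)"
    using assms unfolding equicont_point_def by blast
  obtain m0 where m0: "(1/2::real) ^ m0 < \<eta>"
    using real_arch_pow_inv[OF \<open>\<eta> > 0\<close>, of "1/2"] by auto
  define m where "m = m0 + r"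
  have "(1/2::real) ^ Suc m \<le> (1/2) ^ m0"
    unfolding m_def by (rule power_decreasing) simp_all
  with m0 have small: "(1/2::real) ^ Suc m \<le> \<eta>"
    by linarith
  have "agree r ((G ^^ n) x) ((G ^^ n) y)" if "y \<in> cylinder m x" for y n
  proof (cases "n = 0")
    case True
    then show ?thesis
      using that agree_mono[of m x y r] by (simp add: cylinder_def m_def)
  next
    case False
    have "cdist x y \<le> \<eta>"
      using that small cdist_le_half_power_iff[of x y m] by (simp add: cylinder_def)
    then have "cdist ((G ^^ n) x) ((G ^^ n) y) \<le> (1/2) ^ Suc r"
      using \<eta> that False by (simp add: cylinder_def)
    then show ?thesis
      by (rule cdist_le_half_power_iff[THEN iffD1])
  qed
  then show ?thesis by blast
qed

lemma cylinder_in_sets: "x \<in> X \<Longrightarrow> cylinder m x \<in> sets \<mu>"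
  by (simp add: sets_eq openin_in_borel_sets openin_cylinder)

lemma exists_blocking_cylinder:
  "\<exists>m x0. x0 \<in> X \<and> emeasure \<mu> (cylinder m x0) \<noteq> 0 \<and>
     (\<forall>y\<in>cylinder m x0. \<forall>n. agree r ((G ^^ n) x0) ((G ^^ n) y))"
proof (rule ccontr)
  define B where "B m = {x \<in> X. \<forall>y\<in>cylinder m x. \<forall>n. agree r ((G ^^ n) x) ((G ^^ n) y)}" for m
  assume no_block: "\<not> ?thesis"
  have null: "cylinder m x \<in> null_sets \<mu>" if "x \<in> B m" for m x
  proof -
    have "x \<in> X" "emeasure \<mu> (cylinder m x) = 0"
      using no_block that by (auto simp: B_def)
    then show ?thesis
      using cylinder_in_sets by (simp add: null_sets_def)
  qed
  have "(\<Union>x\<in>B m. cylinder m x) \<in> null_sets \<mu>" for m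
  proof -
    have "cylinder m ` B m \<subseteq> cylinder m ` X"
      by (intro image_mono) (auto simp: B_def)
    then have "countable (cylinder m ` B m)"
      using finite_cylinders by (intro countable_finite) (rule finite_subset)
    moreover have "C \<in> null_sets \<mu>" if "C \<in> cylinder m ` B m" for C
      using that null by blast
    ultimately show ?thesis
      using null_sets_UN'[of "cylinder m ` B m" "\<lambda>C. C"] by simp
  qed
  then have "(\<Union>m. \<Union>x\<in>B m. cylinder m x) \<in> null_sets \<mu>"
    by blast
  moreover have "{x. equicont_point X G x} \<subseteq> (\<Union>m. \<Union>x\<in>B m. cylinder m x)"
  proof
    fix x
    assume "x \<in> {x. equicont_point X G x}"
    then have "x \<in> X" and "\<exists>m. \<forall>y\<in>cylinder m x. \<forall>n. agree r ((G ^^ n) x) ((G ^^ n) y)"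
      using equicont_point_blocking by (auto simp: equicont_point_def)
    then show "x \<in> (\<Union>m. \<Union>x\<in>B m. cylinder m x)"
      using center_in_cylinder by (auto simp: B_def)
  qed
  ultimately have "emeasure \<mu> {x. equicont_point X G x} = 0"
    by (auto intro: emeasure_eq_0)
  with equicontinuous show False
    by (simp add: equicontinuous_measure_def)
qed

lemma AE_eventually_periodic_windows:
  "AE x in \<mu>. \<forall>R. \<exists>n0 p. p > 0 \<and> (\<forall>n\<ge>n0. \<forall>q. agree R ((G ^^ (n + q * p)) x) ((G ^^ n) x))"
proof -
  obtain \<rho> where local: "\<forall>x\<in>X. \<forall>y\<in>X. \<forall>j. (\<forall>i. \<bar>i - j\<bar> \<le> int \<rho> \<longrightarrow> x i = y i) \<longrightarrow> G x j = G y j"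
    using cellular_automaton_local_rule[OF cellular_automaton] by blast
  obtain m x0 where x0: "x0 \<in> X" "emeasure \<mu> (cylinder m x0) \<noteq> 0"
    and block: "\<forall>y\<in>cylinder m x0. \<forall>n. agree \<rho> ((G ^^ n) x0) ((G ^^ n) y)"
    using exists_blocking_cylinder[of \<rho>] by blast
  have "AE x in \<mu>. \<forall>N. (\<exists>b\<ge>int N. shift_by b x \<in> cylinder m x0) \<and> (\<exists>a\<le>- int N. shift_by a x \<in> cylinder m x0)"
    by (rule AE_recurrence_both_sides[OF cylinder_in_sets[OF x0(1)] x0(2)])
  then show ?thesis
    using AE_space
  proof eventually_elim
    case (elim x)
    show ?case
    proof
      fix R
      obtain a where a: "a \<le> - int R" "shift_by a x \<in> cylinder m x0"
        using elim by blast
      obtain b where b: "b \<ge> int (R + \<rho>)" "shift_by b x \<in> cylinder m x0"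
        using elim by blast
      have "x \<in> X" "a + int \<rho> \<le> b"
        using elim a(1) b(1) by simp_all
      then obtain n0 p where "p > 0"
        and periodic: "\<forall>n\<ge>n0. \<forall>q. \<forall>j\<in>{a..b}. (G ^^ (n + q * p)) x j = (G ^^ n) x j"
        using eventually_periodic_between_blocks[OF cellular_automaton local block _ a(2) b(2)] by blast
      have "i \<in> {a..b}" if "\<bar>i\<bar> \<le> int R" for i
        using that a(1) b(1) by auto
      with periodic have "\<forall>n\<ge>n0. \<forall>q. agree R ((G ^^ (n + q * p)) x) ((G ^^ n) x)"
        by (simp add: agree_def)
      with \<open>p > 0\<close> show "\<exists>n0 p. p > 0 \<and> (\<forall>n\<ge>n0. \<forall>q. agree R ((G ^^ (n + q * p)) x) ((G ^^ n) x))"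
        by blast
    qed
  qed
qed

lemma AE_cesaro_orbit_convergent:
  "AE x in \<mu>. \<forall>f. observable f \<longrightarrow> convergent (cesaro_mean (\<lambda>i. f ((G ^^ i) x)))"
  using AE_eventually_periodic_windows AE_space
proof eventually_elim
  case (elim x)
  show ?case
  proof (intro allI impI)
    fix f
    assume f: "observable f"
    show "convergent (cesaro_mean (\<lambda>i. f ((G ^^ i) x)))"
    proof (rule cesaro_mean_convergent_if_almost_periodic)
      fix e :: real
      assume "e > 0"
      obtain R where R: "\<forall>y\<in>X. \<forall>z\<in>cylinder R y. \<bar>f y - f z\<bar> < e"
        using observable_uniformly_continuous[OF f \<open>e > 0\<close>] by blast
      obtain n0 p where "p > 0" and periodic: "\<forall>n\<ge>n0. \<forall>q. agree R ((G ^^ (n + q * p)) x) ((G ^^ n) x)"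
        using elim by blast
      have "\<bar>f ((G ^^ (n + q * p)) x) - f ((G ^^ n) x)\<bar> \<le> e" if "n \<ge> n0" for n q
      proof -
        have in_X: "(G ^^ l) x \<in> X" for l
          using funpow_cellular_automaton_in_X[OF cellular_automaton] elim by simp
        then have "(G ^^ n) x \<in> cylinder R ((G ^^ (n + q * p)) x)"
          using periodic that by (simp add: cylinder_def)
        from R[rule_format, OF in_X this] show ?thesis
          by simp
      qed
      then show "\<exists>n0 p. p > 0 \<and> (\<forall>n\<ge>n0. \<forall>q. \<bar>f ((G ^^ (n + q * p)) x) - f ((G ^^ n) x)\<bar> \<le> e)"
        using \<open>p > 0\<close> by blast
    qed
  qed
qed

lemma cesaro_integral_convergent:
  assumes f: "observable f"
  shows "convergent (cesaro_mean (\<lambda>i. \<integral>x. f ((G ^^ i) x) \<partial>\<mu>))"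
proof -
  define s where "s n x = cesaro_mean (\<lambda>i. f ((G ^^ i) x)) n" for n x
  obtain B where B: "\<forall>x\<in>X. \<bar>f x\<bar> \<le> B"
    using observable_bounded[OF f] by blast
  have measurable: "(\<lambda>x. f ((G ^^ i) x)) \<in> borel_measurable \<mu>" for i
    by (rule borel_measurable_observable[OF space_eq sets_eq observable_comp_funpow[OF cellular_automaton f]])
  then have s_measurable: "s n \<in> borel_measurable \<mu>" for n
    unfolding s_def cesaro_mean_def by measurable
  have "AE x in \<mu>. (\<lambda>n. s n x) \<longlonglongrightarrow> lim (\<lambda>n. s n x)"
    using AE_cesaro_orbit_convergent by eventually_elim (simp add: s_def f convergent_LIMSEQ_iff)
  moreover have "AE x in \<mu>. norm (s n x) \<le> \<bar>B\<bar>" for n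
  proof (rule AE_I2)
    fix x
    assume "x \<in> space \<mu>"
    then have "(G ^^ i) x \<in> X" for i
      using funpow_cellular_automaton_in_X[OF cellular_automaton] by simp
    then have "\<bar>f ((G ^^ i) x)\<bar> \<le> \<bar>B\<bar>" for i
      using B abs_ge_self[of B] by (meson order_trans)
    then show "norm (s n x) \<le> \<bar>B\<bar>"
      unfolding s_def real_norm_def by (rule cesaro_mean_abs_le)
  qed
  ultimately have "(\<lambda>n. integral\<^sup>L \<mu> (s n)) \<longlonglongrightarrow> integral\<^sup>L \<mu> (\<lambda>x. lim (\<lambda>n. s n x))"
    using s_measurable borel_measurable_lim_metric[OF s_measurable]
    by (intro integral_dominated_convergence[where w = "\<lambda>_. \<bar>B\<bar>"]) auto
  moreover have "integral\<^sup>L \<mu> (s n) = cesaro_mean (\<lambda>i. \<integral>x. f ((G ^^ i) x) \<partial>\<mu>) n" for n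
    unfolding s_def cesaro_mean_def
    using integrable_observable[OF borel_prob observable_comp_funpow[OF cellular_automaton f]] by simp
  ultimately show ?thesis
    by (auto intro: convergentI)
qed

end

context ergodic_subshift
begin

lemma cesaro_integral_distr_convergent:
  assumes F: "cellular_automaton A X F"
    and equicontinuous: "equicontinuous_measure \<mu> X (F \<circ> shift_by (- k))"
    and f: "observable f"
  shows "convergent (cesaro_mean (\<lambda>i. integral\<^sup>L (distr \<mu> \<mu> (F ^^ i)) f))"
proof -
  let ?G = "F \<circ> shift_by (- k)"
  interpret equicontinuous_ca A X \<mu> ?G
    using cellular_automaton_comp_shift_by[OF F] equicontinuous by unfold_locales
  have "integral\<^sup>L (distr \<mu> \<mu> (F ^^ i)) f = (\<integral>x. f ((?G ^^ i) x) \<partial>\<mu>)" for i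
  proof -
    have "integral\<^sup>L (distr \<mu> \<mu> (F ^^ i)) f = (\<integral>x. f ((F ^^ i) x) \<partial>\<mu>)"
      by (rule integral_distr_funpow[OF F f])
    also have "\<dots> = (\<integral>x. f ((?G ^^ i) (shift_by (k * int i) x)) \<partial>\<mu>)"
    proof (rule Bochner_Integration.integral_cong)
      fix x
      assume "x \<in> space \<mu>"
      then show "f ((F ^^ i) x) = f ((?G ^^ i) (shift_by (k * int i) x))"
        using funpow_comp_shift_by[OF F shift_by_in_X] by (simp add: shift_by_add)
    qed simp
    also have "\<dots> = (\<integral>x. f ((?G ^^ i) x) \<partial>\<mu>)"
      using borel_measurable_observable[OF space_eq sets_eq observable_comp_funpow[OF cellular_automaton f]]
      by (rule integral_shift_by)
    finally show ?thesis .
  qed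
  then show ?thesis
    using cesaro_integral_convergent[OF f] by simp
qed

lemma cesaro_integral_comp_tendsto:
  assumes F: "cellular_automaton A X F" and f: "observable f"
    and lim: "cesaro_mean (\<lambda>i. integral\<^sup>L (distr \<mu> \<mu> (F ^^ i)) f) \<longlonglongrightarrow> l"
  shows "cesaro_mean (\<lambda>i. integral\<^sup>L (distr \<mu> \<mu> (F ^^ i)) (\<lambda>x. f (F x))) \<longlonglongrightarrow> l"
proof -
  have F_cont: "continuous_map TX TX F"
    by (rule cellular_automaton_continuous[OF F])
  have eq: "integral\<^sup>L (distr \<mu> \<mu> (F ^^ i)) (\<lambda>x. f (F x)) = integral\<^sup>L (distr \<mu> \<mu> (F ^^ Suc i)) f" for i
    using integral_distr_funpow[OF F observable_comp[OF F_cont f], of i]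
      integral_distr_funpow[OF F f, of "Suc i"] by simp
  obtain B where "\<forall>x\<in>X. \<bar>f x\<bar> \<le> B"
    using observable_bounded[OF f] by blast
  then have bound: "\<bar>integral\<^sup>L (distr \<mu> \<mu> (F ^^ i)) f\<bar> \<le> B" for i
    using borel_prob_on_distr[OF borel_prob continuous_map_funpow[OF F_cont]]
      integrable_observable[OF _ f] prob_space.abs_integral_le_const
    by (metis borel_prob_on_def)
  show ?thesis
    using cesaro_mean_Suc_tendsto[OF lim bound] by (simp add: eq)
qed

lemma integral_distr_funpow_shift:
  assumes F: "cellular_automaton A X F" and f: "observable f"
  shows "integral\<^sup>L (distr \<mu> \<mu> (F ^^ i)) (\<lambda>x. f (shift x)) = integral\<^sup>L (distr \<mu> \<mu> (F ^^ i)) f"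
proof -
  have "integral\<^sup>L (distr \<mu> \<mu> (F ^^ i)) (\<lambda>x. f (shift x)) = (\<integral>x. f ((F ^^ i) (shift x)) \<partial>\<mu>)"
    using integral_distr_funpow[OF F observable_comp[OF continuous_map_shift_by f]]
      funpow_cellular_automaton_shift_by[OF F]
    by (auto intro: Bochner_Integration.integral_cong)
  also have "\<dots> = (\<integral>x. f ((F ^^ i) x) \<partial>\<mu>)"
    using integral_shift_by[of "\<lambda>x. f ((F ^^ i) x)" 1]
      borel_measurable_observable[OF space_eq sets_eq observable_comp_funpow[OF F f]]
    by simp
  also have "\<dots> = integral\<^sup>L (distr \<mu> \<mu> (F ^^ i)) f"
    by (rule integral_distr_funpow[OF F f, symmetric])
  finally show ?thesis .
qed

lemma cesaro_limit_invariant: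
  assumes F: "cellular_automaton A X F" and \<mu>c: "borel_prob_on A X \<mu>c"
    and lim: "\<And>f. observable f \<Longrightarrow>
      cesaro_mean (\<lambda>i. integral\<^sup>L (distr \<mu> \<mu> (F ^^ i)) f) \<longlonglongrightarrow> integral\<^sup>L \<mu>c f"
  shows "invariant_measure \<mu>c F" and "invariant_measure \<mu>c shift"
proof -
  have F_cont: "continuous_map TX TX F"
    by (rule cellular_automaton_continuous[OF F])
  show "invariant_measure \<mu>c F"
  proof (rule invariant_measure_if_integral_comp_eq[OF \<mu>c F_cont])
    fix f
    assume f: "observable f"
    show "(\<integral>x. f (F x) \<partial>\<mu>c) = integral\<^sup>L \<mu>c f"
      using lim[OF observable_comp[OF F_cont f]] cesaro_integral_comp_tendsto[OF F f lim[OF f]]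
      by (rule LIMSEQ_unique)
  qed
  show "invariant_measure \<mu>c shift"
  proof (rule invariant_measure_if_integral_comp_eq[OF \<mu>c continuous_map_shift_by])
    fix f
    assume f: "observable f"
    have "cesaro_mean (\<lambda>i. integral\<^sup>L (distr \<mu> \<mu> (F ^^ i)) (\<lambda>x. f (shift x))) \<longlonglongrightarrow> integral\<^sup>L \<mu>c f"
      using lim[OF f] by (simp add: integral_distr_funpow_shift[OF F f])
    then show "(\<integral>x. f (shift x) \<partial>\<mu>c) = integral\<^sup>L \<mu>c f"
      using lim[OF observable_comp[OF continuous_map_shift_by f]] by (rule LIMSEQ_unique[rotated])
  qed
qed

end

theorem mainTheorem5:
  fixes A :: "'a set" and X :: "(int \<Rightarrow> 'a) set"
    and F :: "(int \<Rightarrow> 'a) \<Rightarrow> (int \<Rightarrow> 'a)"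
    and \<mu> :: "(int \<Rightarrow> 'a) measure" and k :: int
  assumes "finite A"
    and "subshift A X"
    and "cellular_automaton A X F"
    and "borel_prob_on A X \<mu>"
    and "shift_ergodic \<mu>"
    and "equicontinuous_measure \<mu> X (F \<circ> shift_by (- k))"
  shows "\<exists>\<mu>c. borel_prob_on A X \<mu>c \<and>
     (\<forall>f. continuous_map (subtopology (full_shift_top A) X) euclideanreal f \<longrightarrow>
        (\<lambda>n. (1 / real n) * (\<Sum>i<n. integral\<^sup>L (distr \<mu> \<mu> (F ^^ i)) f))
          \<longlonglongrightarrow> integral\<^sup>L \<mu>c f) \<and>
     invariant_measure \<mu>c F \<and> invariant_measure \<mu>c shift"
proof -
  interpret ergodic_subshift A X \<mu>
    using assms(1,2,4,5) by unfold_locales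
  have "borel_prob_on A X (distr \<mu> \<mu> (F ^^ i))" for i
    using borel_prob_on_distr[OF borel_prob continuous_map_funpow[OF cellular_automaton_continuous[OF assms(3)]]] .
  from cesaro_vague_limit[OF this cesaro_integral_distr_convergent[OF assms(3,6)]]
  obtain \<mu>c where \<mu>c: "borel_prob_on A X \<mu>c" and lim:
    "\<And>f. observable f \<Longrightarrow> cesaro_mean (\<lambda>i. integral\<^sup>L (distr \<mu> \<mu> (F ^^ i)) f) \<longlonglongrightarrow> integral\<^sup>L \<mu>c f"
    by blast
  then have "\<forall>f. observable f \<longrightarrow> (\<lambda>n. (1 / real n) * (\<Sum>i<n. integral\<^sup>L (distr \<mu> \<mu> (F ^^ i)) f))
      \<longlonglongrightarrow> integral\<^sup>L \<mu>c f"
    by (simp add: cesaro_mean_def[abs_def])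
  with \<mu>c cesaro_limit_invariant[OF assms(3) \<mu>c lim] show ?thesis
    by blast
qed

end
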